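(* If $\mathcal{D}$ is a fibrant double category, then the functor $\mathbf{Mnd}(\mathcal{D})\to\mathcal{D}_0$ is a fibration and the functor $\mathbf{Cmd}(\mathcal{D})\to\mathcal{D}_0$ is an opfibration, where both functors send a (co)monad $M\colon A\nrightarrow A$ to $A$ and a (co)monad morphism to its vertical source (equal to its target).
   Context: A (pseudo) double category $\mathcal{D}$ has a category $\mathcal{D}_0$ of objects and vertical 1-cells, a category $\mathcal{D}_1$ of horizontal 1-cells $M\colon A\nrightarrow B$ and 2-morphisms (squares with vertical source and target), units $1_A$, and horizontal composition $\odot$ associative and unital up to coherent globular isomorphisms (globular: identity vertical source and target). A monad in $\mathcal{D}$ is a horizontal endo-1-cell $M\colon A\nrightarrow A$ with globular 2-morphisms $m\colon M\odot M\Rightarrow M$ and $\eta\colon1_A\Rightarrow M$ satisfying associativity and unit laws; a monad morphism $M\to N$ ($N\colon B\nrightarrow B$) is a 2-morphism $M\Rightarrow N$ whose vertical source and target are the same $f\colon A\to B$, compatible with multiplications and units. This gives the category $\mathbf{Mnd}(\mathcal{D})$. Dually, comonads $C\colon A\nrightarrow A$ with globular $\Delta\colon C\Rightarrow C\odot C$, $\epsilon\colon C\Rightarrow1_A$ (coassociative, counital) and comonad morphisms (2-morphisms with equal vertical source and target compatible with $\Delta,\epsilon$) form $\mathbf{Cmd}(\mathcal{D})$. $\mathcal{D}$ is fibrant if every vertical $f\colon A\to B$ has a companion $\hat f\colon A\nrightarrow B$ (with $p_1\colon\hat f\Rightarrow1_B$ of vertical source $f$, target $\mathrm{id}_B$,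 and $p_2\colon1_A\Rightarrow\hat f$ of source $\mathrm{id}_A$, target $f$, $p_1p_2=1_f$, $p_1\odot p_2\cong1_{\hat f}$) and a conjoint $\check f\colon B\nrightarrow A$ (with $q_1\colon\check f\Rightarrow1_B$ of source $\mathrm{id}_B$, target $f$, $q_2\colon1_A\Rightarrow\check f$ of source $f$, target $\mathrm{id}_A$, $q_1q_2=1_f$, $q_2\odot q_1\cong1_{\check f}$). *)

theory Defs
  imports Main
begin

text \<open>Types: 'o objects, 'v vertical 1-cells, 'h horizontal 1-cells, 's 2-morphisms (squares).
  Conventions: vcomp g f = g \<circ> f (f first); scomp \<beta> \<alpha> = \<beta> \<circ> \<alpha> (vertical composite
  of squares, i.e. composition in D1, \<alpha> first).
  Horizontal composition is written in applicative order, as in the paper's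
  "p1 \<odot> p2": for M : A -/-> B and N : B -/-> C, hcomp N M = N \<odot> M : A -/-> C;
  for squares, shcomp \<beta> \<alpha> = \<beta> \<odot> \<alpha> requires sright \<alpha> = sleft \<beta>.
  A square \<alpha> : M \<Rightarrow> N has horizontal source sdom \<alpha> = M, target scod \<alpha> = N,
  vertical source sleft \<alpha> : hsrc M \<rightarrow> hsrc N and vertical target sright \<alpha> : htgt M \<rightarrow> htgt N.\<close>

record ('o,'v,'h,'s) dblcat =
  Ob :: "'o set"
  VAr :: "'v set"
  vdom :: "'v \<Rightarrow> 'o"
  vcod :: "'v \<Rightarrow> 'o"
  vid :: "'o \<Rightarrow> 'v"
  vcomp :: "'v \<Rightarrow> 'v \<Rightarrow> 'v"
  HAr :: "'h set"
  hsrc :: "'h \<Rightarrow> 'o"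
  htgt :: "'h \<Rightarrow> 'o"
  Sq :: "'s set"
  sdom :: "'s \<Rightarrow> 'h"
  scod :: "'s \<Rightarrow> 'h"
  sleft :: "'s \<Rightarrow> 'v"
  sright :: "'s \<Rightarrow> 'v"
  sid :: "'h \<Rightarrow> 's"
  scomp :: "'s \<Rightarrow> 's \<Rightarrow> 's"
  hunit :: "'o \<Rightarrow> 'h"
  sunit :: "'v \<Rightarrow> 's"
  hcomp :: "'h \<Rightarrow> 'h \<Rightarrow> 'h"
  shcomp :: "'s \<Rightarrow> 's \<Rightarrow> 's"
  assoc :: "'h \<Rightarrow> 'h \<Rightarrow> 'h \<Rightarrow> 's"
  lunit :: "'h \<Rightarrow> 's"
  runit :: "'h \<Rightarrow> 's"

definition glob_iso :: "('o,'v,'h,'s,'z) dblcat_scheme \<Rightarrow> 's \<Rightarrow> 'h \<Rightarrow> 'h \<Rightarrow> bool" where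
  "glob_iso D \<theta> X Y \<longleftrightarrow> \<theta> \<in> Sq D \<and> sdom D \<theta> = X \<and> scod D \<theta> = Y \<and>
     sleft D \<theta> = vid D (hsrc D X) \<and> sright D \<theta> = vid D (htgt D X) \<and>
     (\<exists>\<psi>\<in>Sq D. sdom D \<psi> = Y \<and> scod D \<psi> = X \<and>
        scomp D \<psi> \<theta> = sid D X \<and> scomp D \<theta> \<psi> = sid D Y)"

definition pseudo_double_category :: "('o,'v,'h,'s,'z) dblcat_scheme \<Rightarrow> bool" where
  "pseudo_double_category D \<longleftrightarrow>
   \<comment> \<open>D0 is a category\<close>
   (\<forall>a\<in>Ob D. vid D a \<in> VAr D \<and> vdom D (vid D a) = a \<and> vcod D (vid D a) = a) \<and>
   (\<forall>f\<in>VAr D. vdom D f \<in> Ob D \<and> vcod D f \<in> Ob D) \<and>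
   (\<forall>f\<in>VAr D. \<forall>g\<in>VAr D. vcod D f = vdom D g \<longrightarrow>
      vcomp D g f \<in> VAr D \<and> vdom D (vcomp D g f) = vdom D f \<and> vcod D (vcomp D g f) = vcod D g) \<and>
   (\<forall>f\<in>VAr D. vcomp D f (vid D (vdom D f)) = f \<and> vcomp D (vid D (vcod D f)) f = f) \<and>
   (\<forall>f\<in>VAr D. \<forall>g\<in>VAr D. \<forall>h\<in>VAr D. vcod D f = vdom D g \<longrightarrow> vcod D g = vdom D h \<longrightarrow>
      vcomp D h (vcomp D g f) = vcomp D (vcomp D h g) f) \<and>
   \<comment> \<open>D1 is a category\<close>
   (\<forall>M\<in>HAr D. sid D M \<in> Sq D \<and> sdom D (sid D M) = M \<and> scod D (sid D M) = M) \<and>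
   (\<forall>\<alpha>\<in>Sq D. sdom D \<alpha> \<in> HAr D \<and> scod D \<alpha> \<in> HAr D) \<and>
   (\<forall>\<alpha>\<in>Sq D. \<forall>\<beta>\<in>Sq D. scod D \<alpha> = sdom D \<beta> \<longrightarrow>
      scomp D \<beta> \<alpha> \<in> Sq D \<and> sdom D (scomp D \<beta> \<alpha>) = sdom D \<alpha> \<and> scod D (scomp D \<beta> \<alpha>) = scod D \<beta>) \<and>
   (\<forall>\<alpha>\<in>Sq D. scomp D \<alpha> (sid D (sdom D \<alpha>)) = \<alpha> \<and> scomp D (sid D (scod D \<alpha>)) \<alpha> = \<alpha>) \<and>
   (\<forall>\<alpha>\<in>Sq D. \<forall>\<beta>\<in>Sq D. \<forall>\<gamma>\<in>Sq D. scod D \<alpha> = sdom D \<beta> \<longrightarrow> scod D \<beta> = sdom D \<gamma> \<longrightarrow>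
      scomp D \<gamma> (scomp D \<beta> \<alpha>) = scomp D (scomp D \<gamma> \<beta>) \<alpha>) \<and>
   \<comment> \<open>source and target functors S, T : D1 \<rightarrow> D0\<close>
   (\<forall>M\<in>HAr D. hsrc D M \<in> Ob D \<and> htgt D M \<in> Ob D) \<and>
   (\<forall>\<alpha>\<in>Sq D. sleft D \<alpha> \<in> VAr D \<and> vdom D (sleft D \<alpha>) = hsrc D (sdom D \<alpha>) \<and>
        vcod D (sleft D \<alpha>) = hsrc D (scod D \<alpha>) \<and>
      sright D \<alpha> \<in> VAr D \<and> vdom D (sright D \<alpha>) = htgt D (sdom D \<alpha>) \<and>
        vcod D (sright D \<alpha>) = htgt D (scod D \<alpha>)) \<and>
   (\<forall>M\<in>HAr D. sleft D (sid D M) = vid D (hsrc D M) \<and> sright D (sid D M) = vid D (htgt D M)) \<and>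
   (\<forall>\<alpha>\<in>Sq D. \<forall>\<beta>\<in>Sq D. scod D \<alpha> = sdom D \<beta> \<longrightarrow>
      sleft D (scomp D \<beta> \<alpha>) = vcomp D (sleft D \<beta>) (sleft D \<alpha>) \<and>
      sright D (scomp D \<beta> \<alpha>) = vcomp D (sright D \<beta>) (sright D \<alpha>)) \<and>
   \<comment> \<open>unit functor U : D0 \<rightarrow> D1\<close>
   (\<forall>a\<in>Ob D. hunit D a \<in> HAr D \<and> hsrc D (hunit D a) = a \<and> htgt D (hunit D a) = a) \<and>
   (\<forall>f\<in>VAr D. sunit D f \<in> Sq D \<and> sdom D (sunit D f) = hunit D (vdom D f) \<and>
      scod D (sunit D f) = hunit D (vcod D f) \<and> sleft D (sunit D f) = f \<and> sright D (sunit D f) = f) \<and>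
   (\<forall>a\<in>Ob D. sunit D (vid D a) = sid D (hunit D a)) \<and>
   (\<forall>f\<in>VAr D. \<forall>g\<in>VAr D. vcod D f = vdom D g \<longrightarrow>
      sunit D (vcomp D g f) = scomp D (sunit D g) (sunit D f)) \<and>
   \<comment> \<open>horizontal composition functor D1 \<times>_D0 D1 \<rightarrow> D1\<close>
   (\<forall>M\<in>HAr D. \<forall>N\<in>HAr D. htgt D M = hsrc D N \<longrightarrow>
      hcomp D N M \<in> HAr D \<and> hsrc D (hcomp D N M) = hsrc D M \<and> htgt D (hcomp D N M) = htgt D N) \<and>
   (\<forall>\<alpha>\<in>Sq D. \<forall>\<beta>\<in>Sq D. sright D \<alpha> = sleft D \<beta> \<longrightarrow>
      shcomp D \<beta> \<alpha> \<in> Sq D \<and> sdom D (shcomp D \<beta> \<alpha>) = hcomp D (sdom D \<beta>) (sdom D \<alpha>) \<and>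
      scod D (shcomp D \<beta> \<alpha>) = hcomp D (scod D \<beta>) (scod D \<alpha>) \<and>
      sleft D (shcomp D \<beta> \<alpha>) = sleft D \<alpha> \<and> sright D (shcomp D \<beta> \<alpha>) = sright D \<beta>) \<and>
   (\<forall>M\<in>HAr D. \<forall>N\<in>HAr D. htgt D M = hsrc D N \<longrightarrow>
      shcomp D (sid D N) (sid D M) = sid D (hcomp D N M)) \<and>
   (\<forall>\<alpha>\<in>Sq D. \<forall>\<alpha>'\<in>Sq D. \<forall>\<beta>\<in>Sq D. \<forall>\<beta>'\<in>Sq D.
      scod D \<alpha> = sdom D \<alpha>' \<longrightarrow> scod D \<beta> = sdom D \<beta>' \<longrightarrow>
      sright D \<alpha> = sleft D \<beta> \<longrightarrow> sright D \<alpha>' = sleft D \<beta>' \<longrightarrow>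
      shcomp D (scomp D \<beta>' \<beta>) (scomp D \<alpha>' \<alpha>) = scomp D (shcomp D \<beta>' \<alpha>') (shcomp D \<beta> \<alpha>)) \<and>
   \<comment> \<open>associator and unitors: globular isomorphisms\<close>
   (\<forall>M\<in>HAr D. \<forall>N\<in>HAr D. \<forall>P\<in>HAr D. htgt D M = hsrc D N \<longrightarrow> htgt D N = hsrc D P \<longrightarrow>
      glob_iso D (assoc D P N M) (hcomp D (hcomp D P N) M) (hcomp D P (hcomp D N M))) \<and>
   (\<forall>M\<in>HAr D. glob_iso D (lunit D M) (hcomp D (hunit D (htgt D M)) M) M \<and>
               glob_iso D (runit D M) (hcomp D M (hunit D (hsrc D M))) M) \<and>
   \<comment> \<open>naturality\<close>
   (\<forall>\<alpha>\<in>Sq D. \<forall>\<beta>\<in>Sq D. \<forall>\<gamma>\<in>Sq D. sright D \<alpha> = sleft D \<beta> \<longrightarrow> sright D \<beta> = sleft D \<gamma> \<longrightarrow>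
      scomp D (assoc D (scod D \<gamma>) (scod D \<beta>) (scod D \<alpha>)) (shcomp D (shcomp D \<gamma> \<beta>) \<alpha>) =
      scomp D (shcomp D \<gamma> (shcomp D \<beta> \<alpha>)) (assoc D (sdom D \<gamma>) (sdom D \<beta>) (sdom D \<alpha>))) \<and>
   (\<forall>\<alpha>\<in>Sq D.
      scomp D (lunit D (scod D \<alpha>)) (shcomp D (sunit D (sright D \<alpha>)) \<alpha>) = scomp D \<alpha> (lunit D (sdom D \<alpha>)) \<and>
      scomp D (runit D (scod D \<alpha>)) (shcomp D \<alpha> (sunit D (sleft D \<alpha>))) = scomp D \<alpha> (runit D (sdom D \<alpha>))) \<and>
   \<comment> \<open>pentagon and triangle\<close>
   (\<forall>M\<in>HAr D. \<forall>N\<in>HAr D. \<forall>P\<in>HAr D. \<forall>Q\<in>HAr D.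
      htgt D M = hsrc D N \<longrightarrow> htgt D N = hsrc D P \<longrightarrow> htgt D P = hsrc D Q \<longrightarrow>
      scomp D (assoc D Q P (hcomp D N M)) (assoc D (hcomp D Q P) N M) =
      scomp D (shcomp D (sid D Q) (assoc D P N M))
        (scomp D (assoc D Q (hcomp D P N) M) (shcomp D (assoc D Q P N) (sid D M)))) \<and>
   (\<forall>M\<in>HAr D. \<forall>N\<in>HAr D. htgt D M = hsrc D N \<longrightarrow>
      scomp D (shcomp D (sid D N) (lunit D M)) (assoc D N (hunit D (htgt D M)) M) =
      shcomp D (runit D N) (sid D M))"

definition has_companion :: "('o,'v,'h,'s,'z) dblcat_scheme \<Rightarrow> 'v \<Rightarrow> bool" where
  "has_companion D f \<longleftrightarrow> (\<exists>fh\<in>HAr D. \<exists>p1\<in>Sq D. \<exists>p2\<in>Sq D.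
     hsrc D fh = vdom D f \<and> htgt D fh = vcod D f \<and>
     sdom D p1 = fh \<and> scod D p1 = hunit D (vcod D f) \<and> sleft D p1 = f \<and> sright D p1 = vid D (vcod D f) \<and>
     sdom D p2 = hunit D (vdom D f) \<and> scod D p2 = fh \<and> sleft D p2 = vid D (vdom D f) \<and> sright D p2 = f \<and>
     scomp D p1 p2 = sunit D f \<and>
     scomp D (lunit D fh) (shcomp D p1 p2) = runit D fh)"

definition has_conjoint :: "('o,'v,'h,'s,'z) dblcat_scheme \<Rightarrow> 'v \<Rightarrow> bool" where
  "has_conjoint D f \<longleftrightarrow> (\<exists>fc\<in>HAr D. \<exists>q1\<in>Sq D. \<exists>q2\<in>Sq D.
     hsrc D fc = vcod D f \<and> htgt D fc = vdom D f \<and>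
     sdom D q1 = fc \<and> scod D q1 = hunit D (vcod D f) \<and> sleft D q1 = vid D (vcod D f) \<and> sright D q1 = f \<and>
     sdom D q2 = hunit D (vdom D f) \<and> scod D q2 = fc \<and> sleft D q2 = f \<and> sright D q2 = vid D (vdom D f) \<and>
     scomp D q1 q2 = sunit D f \<and>
     scomp D (runit D fc) (shcomp D q2 q1) = lunit D fc)"

definition fibrant :: "('o,'v,'h,'s,'z) dblcat_scheme \<Rightarrow> bool" where
  "fibrant D \<longleftrightarrow> pseudo_double_category D \<and>
     (\<forall>f\<in>VAr D. has_companion D f \<and> has_conjoint D f)"

type_synonym ('o,'h,'s) mnd = "'o \<times> 'h \<times> 's \<times> 's"

definition globular :: "('o,'v,'h,'s,'z) dblcat_scheme \<Rightarrow> 's \<Rightarrow> 'h \<Rightarrow> 'h \<Rightarrow> bool" where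
  "globular D \<theta> X Y \<longleftrightarrow> \<theta> \<in> Sq D \<and> sdom D \<theta> = X \<and> scod D \<theta> = Y \<and>
     sleft D \<theta> = vid D (hsrc D X) \<and> sright D \<theta> = vid D (htgt D X)"

definition is_monad :: "('o,'v,'h,'s,'z) dblcat_scheme \<Rightarrow> ('o,'h,'s) mnd \<Rightarrow> bool" where
  "is_monad D X \<longleftrightarrow> (case X of (A, M, m, \<eta>) \<Rightarrow>
     A \<in> Ob D \<and> M \<in> HAr D \<and> hsrc D M = A \<and> htgt D M = A \<and>
     globular D m (hcomp D M M) M \<and> globular D \<eta> (hunit D A) M \<and>
     scomp D m (shcomp D m (sid D M)) =
       scomp D m (scomp D (shcomp D (sid D M) m) (assoc D M M M)) \<and>
     scomp D m (shcomp D \<eta> (sid D M)) = lunit D M \<and>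
     scomp D m (shcomp D (sid D M) \<eta>) = runit D M)"

definition monad_mor :: "('o,'v,'h,'s,'z) dblcat_scheme \<Rightarrow> ('o,'h,'s) mnd \<Rightarrow> ('o,'h,'s) mnd \<Rightarrow> 's \<Rightarrow> bool" where
  "monad_mor D X Y \<alpha> \<longleftrightarrow> is_monad D X \<and> is_monad D Y \<and>
     (case X of (A, M, m, \<eta>) \<Rightarrow> case Y of (B, N, n, \<epsilon>) \<Rightarrow>
       \<alpha> \<in> Sq D \<and> sdom D \<alpha> = M \<and> scod D \<alpha> = N \<and> sleft D \<alpha> = sright D \<alpha> \<and>
       scomp D \<alpha> m = scomp D n (shcomp D \<alpha> \<alpha>) \<and>
       scomp D \<alpha> \<eta> = scomp D \<epsilon> (sunit D (sleft D \<alpha>)))"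

definition is_comonad :: "('o,'v,'h,'s,'z) dblcat_scheme \<Rightarrow> ('o,'h,'s) mnd \<Rightarrow> bool" where
  "is_comonad D X \<longleftrightarrow> (case X of (A, C, \<Delta>, \<epsilon>) \<Rightarrow>
     A \<in> Ob D \<and> C \<in> HAr D \<and> hsrc D C = A \<and> htgt D C = A \<and>
     globular D \<Delta> C (hcomp D C C) \<and> globular D \<epsilon> C (hunit D A) \<and>
     scomp D (assoc D C C C) (scomp D (shcomp D \<Delta> (sid D C)) \<Delta>) =
       scomp D (shcomp D (sid D C) \<Delta>) \<Delta> \<and>
     scomp D (lunit D C) (scomp D (shcomp D \<epsilon> (sid D C)) \<Delta>) = sid D C \<and>
     scomp D (runit D C) (scomp D (shcomp D (sid D C) \<epsilon>) \<Delta>) = sid D C)"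

definition comonad_mor :: "('o,'v,'h,'s,'z) dblcat_scheme \<Rightarrow> ('o,'h,'s) mnd \<Rightarrow> ('o,'h,'s) mnd \<Rightarrow> 's \<Rightarrow> bool" where
  "comonad_mor D X Y \<alpha> \<longleftrightarrow> is_comonad D X \<and> is_comonad D Y \<and>
     (case X of (A, C, \<Delta>, \<epsilon>) \<Rightarrow> case Y of (B, E, \<Delta>', \<epsilon>') \<Rightarrow>
       \<alpha> \<in> Sq D \<and> sdom D \<alpha> = C \<and> scod D \<alpha> = E \<and> sleft D \<alpha> = sright D \<alpha> \<and>
       scomp D (shcomp D \<alpha> \<alpha>) \<Delta> = scomp D \<Delta>' \<alpha> \<and>
       scomp D \<epsilon>' \<alpha> = scomp D (sunit D (sleft D \<alpha>)) \<epsilon>)"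

text \<open>Grothendieck fibrations, for a functor P = (P0 on objects, P1 on morphisms)
  from a category E (objects ObE, hom-predicate HomE x y e for e : x \<rightarrow> y,
  composition compE g f = g \<circ> f) to a category B (HomB, compB likewise).\<close>
definition cartesian ::
  "('x \<Rightarrow> bool) \<Rightarrow> ('x \<Rightarrow> 'x \<Rightarrow> 'e \<Rightarrow> bool) \<Rightarrow> ('e \<Rightarrow> 'e \<Rightarrow> 'e) \<Rightarrow> ('x \<Rightarrow> 'b) \<Rightarrow> ('e \<Rightarrow> 'w) \<Rightarrow>
   ('b \<Rightarrow> 'b \<Rightarrow> 'w \<Rightarrow> bool) \<Rightarrow> ('w \<Rightarrow> 'w \<Rightarrow> 'w) \<Rightarrow> 'x \<Rightarrow> 'x \<Rightarrow> 'e \<Rightarrow> bool" where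
  "cartesian ObE HomE compE P0 P1 HomB compB x y e \<longleftrightarrow>
     (\<forall>z h g. ObE z \<and> HomE z y h \<and> HomB (P0 z) (P0 x) g \<and> compB (P1 e) g = P1 h \<longrightarrow>
        (\<exists>!k. HomE z x k \<and> P1 k = g \<and> compE e k = h))"

definition fibration ::
  "('x \<Rightarrow> bool) \<Rightarrow> ('x \<Rightarrow> 'x \<Rightarrow> 'e \<Rightarrow> bool) \<Rightarrow> ('e \<Rightarrow> 'e \<Rightarrow> 'e) \<Rightarrow> ('x \<Rightarrow> 'b) \<Rightarrow> ('e \<Rightarrow> 'w) \<Rightarrow>
   ('b \<Rightarrow> 'b \<Rightarrow> 'w \<Rightarrow> bool) \<Rightarrow> ('w \<Rightarrow> 'w \<Rightarrow> 'w) \<Rightarrow> bool" where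
  "fibration ObE HomE compE P0 P1 HomB compB \<longleftrightarrow>
     (\<forall>y a f. ObE y \<and> HomB a (P0 y) f \<longrightarrow>
        (\<exists>x e. ObE x \<and> HomE x y e \<and> P0 x = a \<and> P1 e = f \<and>
           cartesian ObE HomE compE P0 P1 HomB compB x y e))"

definition opfibration ::
  "('x \<Rightarrow> bool) \<Rightarrow> ('x \<Rightarrow> 'x \<Rightarrow> 'e \<Rightarrow> bool) \<Rightarrow> ('e \<Rightarrow> 'e \<Rightarrow> 'e) \<Rightarrow> ('x \<Rightarrow> 'b) \<Rightarrow> ('e \<Rightarrow> 'w) \<Rightarrow>
   ('b \<Rightarrow> 'b \<Rightarrow> 'w \<Rightarrow> bool) \<Rightarrow> ('w \<Rightarrow> 'w \<Rightarrow> 'w) \<Rightarrow> bool" where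
  "opfibration ObE HomE compE P0 P1 HomB compB \<longleftrightarrow>
     fibration ObE (\<lambda>x y. HomE y x) (\<lambda>g f. compE f g) P0 P1 (\<lambda>a b. HomB b a) (\<lambda>g f. compB f g)"

definition vhom :: "('o,'v,'h,'s,'z) dblcat_scheme \<Rightarrow> 'o \<Rightarrow> 'o \<Rightarrow> 'v \<Rightarrow> bool" where
  "vhom D a b f \<longleftrightarrow> f \<in> VAr D \<and> vdom D f = a \<and> vcod D f = b"

definition Mnd_fibration :: "('o,'v,'h,'s,'z) dblcat_scheme \<Rightarrow> bool" where
  "Mnd_fibration D \<longleftrightarrow>
     fibration (is_monad D) (monad_mor D) (scomp D) fst (sleft D) (vhom D) (vcomp D)"

definition Cmd_opfibration :: "('o,'v,'h,'s,'z) dblcat_scheme \<Rightarrow> bool" where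
  "Cmd_opfibration D \<longleftrightarrow>
     opfibration (is_comonad D) (comonad_mor D) (scomp D) fst (sleft D) (vhom D) (vcomp D)"

end

theory Submission
  imports Defs
begin

text \<open>In a fibrant double category every horizontal cell \<open>N : B \<nrightarrow> C\<close> has restrictions along
  vertical arrows \<open>f\<close>, \<open>g\<close>: composing \<open>N\<close> with the companion of \<open>f\<close> and the conjoint of \<open>g\<close>
  gives \<open>N(f,g)\<close> together with a cartesian square \<open>N(f,g) \<Rightarrow> N\<close>; the zigzag identities of
  companions and conjoints, together with Kelly's unit coherences, provide the unique factorisations.
  For a monad \<open>N\<close> on \<open>B\<close> and \<open>f : A \<rightarrow> B\<close>, the multiplication and unit of \<open>N\<close> factor uniquely
  through the cartesian square \<open>N(f,f) \<Rightarrow> N\<close>; uniqueness of factorisations transports the monad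
  laws and makes this square a cartesian morphism of monads, so \<open>Mnd(D) \<rightarrow> D\<^sub>0\<close> is a fibration.
  Comonads are handled by duality: reversing squares and vertical arrows gives a fibrant double
  category whose monads are the comonads of \<open>D\<close>, and whose category of monads is \<open>Cmd(D)\<^sup>o\<^sup>p\<close>
  over \<open>D\<^sub>0\<^sup>o\<^sup>p\<close>.\<close>

text \<open>Only meaningful for invertible squares; on other squares the value is unspecified.\<close>

definition sinv :: "('o,'v,'h,'s,'z) dblcat_scheme \<Rightarrow> 's \<Rightarrow> 's" where
  "sinv D \<theta> = (SOME \<psi>. \<psi> \<in> Sq D \<and> sdom D \<psi> = scod D \<theta> \<and> scod D \<psi> = sdom D \<theta> \<and>
     scomp D \<psi> \<theta> = sid D (sdom D \<theta>) \<and> scomp D \<theta> \<psi> = sid D (scod D \<theta>))"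

definition companion :: "('o,'v,'h,'s,'z) dblcat_scheme \<Rightarrow> 'v \<Rightarrow> 'h \<Rightarrow> 's \<Rightarrow> 's \<Rightarrow> bool" where
  "companion D f fh p1 p2 \<longleftrightarrow> fh \<in> HAr D \<and> p1 \<in> Sq D \<and> p2 \<in> Sq D \<and>
     hsrc D fh = vdom D f \<and> htgt D fh = vcod D f \<and>
     sdom D p1 = fh \<and> scod D p1 = hunit D (vcod D f) \<and> sleft D p1 = f \<and> sright D p1 = vid D (vcod D f) \<and>
     sdom D p2 = hunit D (vdom D f) \<and> scod D p2 = fh \<and> sleft D p2 = vid D (vdom D f) \<and> sright D p2 = f \<and>
     scomp D p1 p2 = sunit D f \<and>
     scomp D (lunit D fh) (shcomp D p1 p2) = runit D fh"

definition conjoint :: "('o,'v,'h,'s,'z) dblcat_scheme \<Rightarrow> 'v \<Rightarrow> 'h \<Rightarrow> 's \<Rightarrow> 's \<Rightarrow> bool" where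
  "conjoint D f fc q1 q2 \<longleftrightarrow> fc \<in> HAr D \<and> q1 \<in> Sq D \<and> q2 \<in> Sq D \<and>
     hsrc D fc = vcod D f \<and> htgt D fc = vdom D f \<and>
     sdom D q1 = fc \<and> scod D q1 = hunit D (vcod D f) \<and> sleft D q1 = vid D (vcod D f) \<and> sright D q1 = f \<and>
     sdom D q2 = hunit D (vdom D f) \<and> scod D q2 = fc \<and> sleft D q2 = f \<and> sright D q2 = vid D (vdom D f) \<and>
     scomp D q1 q2 = sunit D f \<and>
     scomp D (runit D fc) (shcomp D q2 q1) = lunit D fc"

lemma has_companion_iff: "has_companion D f \<longleftrightarrow> (\<exists>fh p1 p2. companion D f fh p1 p2)"
  unfolding has_companion_def companion_def by blast

lemma has_conjoint_iff: "has_conjoint D f \<longleftrightarrow> (\<exists>fc q1 q2. conjoint D f fc q1 q2)"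
  unfolding has_conjoint_def conjoint_def by blast

section \<open>The calculus of squares\<close>

locale pseudo_double =
  fixes D :: "('o,'v,'h,'s,'z) dblcat_scheme"
  assumes pseudo_double_category: "pseudo_double_category D"
begin

lemmas double_category_axioms = pseudo_double_category[unfolded pseudo_double_category_def]

lemma vid_simps [simp]:
  assumes "a \<in> Ob D"
  shows "vid D a \<in> VAr D" "vdom D (vid D a) = a" "vcod D (vid D a) = a"
  using assms double_category_axioms by simp_all

lemma vdom_vcod_in_Ob [simp]:
  assumes "f \<in> VAr D"
  shows "vdom D f \<in> Ob D" "vcod D f \<in> Ob D"
  using assms double_category_axioms by simp_all

lemma vcomp_simps [simp]:
  assumes "f \<in> VAr D" "g \<in> VAr D" "vcod D f = vdom D g"
  shows "vcomp D g f \<in> VAr D" "vdom D (vcomp D g f) = vdom D f" "vcod D (vcomp D g f) = vcod D g"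
  using assms double_category_axioms by simp_all

lemma vcomp_vid [simp]:
  assumes "f \<in> VAr D"
  shows "vdom D f = a \<Longrightarrow> vcomp D f (vid D a) = f" "vcod D f = a \<Longrightarrow> vcomp D (vid D a) f = f"
  using assms double_category_axioms by auto

lemma vcomp_assoc [simp]:
  assumes "f \<in> VAr D" "g \<in> VAr D" "h \<in> VAr D" "vcod D f = vdom D g" "vcod D g = vdom D h"
  shows "vcomp D (vcomp D h g) f = vcomp D h (vcomp D g f)"
  using assms double_category_axioms by simp

lemma sid_simps [simp]:
  assumes "M \<in> HAr D"
  shows "sid D M \<in> Sq D" "sdom D (sid D M) = M" "scod D (sid D M) = M"
    "sleft D (sid D M) = vid D (hsrc D M)" "sright D (sid D M) = vid D (htgt D M)"
  using assms double_category_axioms by simp_all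

lemma sdom_scod_in_HAr [simp]:
  assumes "\<alpha> \<in> Sq D"
  shows "sdom D \<alpha> \<in> HAr D" "scod D \<alpha> \<in> HAr D"
  using assms double_category_axioms by simp_all

lemma scomp_simps [simp]:
  assumes "\<alpha> \<in> Sq D" "\<beta> \<in> Sq D" "scod D \<alpha> = sdom D \<beta>"
  shows "scomp D \<beta> \<alpha> \<in> Sq D" "sdom D (scomp D \<beta> \<alpha>) = sdom D \<alpha>" "scod D (scomp D \<beta> \<alpha>) = scod D \<beta>"
    "sleft D (scomp D \<beta> \<alpha>) = vcomp D (sleft D \<beta>) (sleft D \<alpha>)"
    "sright D (scomp D \<beta> \<alpha>) = vcomp D (sright D \<beta>) (sright D \<alpha>)"
  using assms double_category_axioms by simp_all

lemma scomp_sid [simp]: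
  assumes "\<alpha> \<in> Sq D"
  shows "sdom D \<alpha> = M \<Longrightarrow> scomp D \<alpha> (sid D M) = \<alpha>" "scod D \<alpha> = M \<Longrightarrow> scomp D (sid D M) \<alpha> = \<alpha>"
  using assms double_category_axioms by auto

lemma scomp_assoc [simp]:
  assumes "\<alpha> \<in> Sq D" "\<beta> \<in> Sq D" "\<gamma> \<in> Sq D" "scod D \<alpha> = sdom D \<beta>" "scod D \<beta> = sdom D \<gamma>"
  shows "scomp D (scomp D \<gamma> \<beta>) \<alpha> = scomp D \<gamma> (scomp D \<beta> \<alpha>)"
  using assms double_category_axioms by simp

lemma hsrc_htgt_in_Ob [simp]:
  assumes "M \<in> HAr D"
  shows "hsrc D M \<in> Ob D" "htgt D M \<in> Ob D"
  using assms double_category_axioms by simp_all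

lemma sleft_sright_simps [simp]:
  assumes "\<alpha> \<in> Sq D"
  shows "sleft D \<alpha> \<in> VAr D" "vdom D (sleft D \<alpha>) = hsrc D (sdom D \<alpha>)" "vcod D (sleft D \<alpha>) = hsrc D (scod D \<alpha>)"
    "sright D \<alpha> \<in> VAr D" "vdom D (sright D \<alpha>) = htgt D (sdom D \<alpha>)" "vcod D (sright D \<alpha>) = htgt D (scod D \<alpha>)"
  using assms double_category_axioms by simp_all

lemma hunit_simps [simp]:
  assumes "a \<in> Ob D"
  shows "hunit D a \<in> HAr D" "hsrc D (hunit D a) = a" "htgt D (hunit D a) = a"
    "sunit D (vid D a) = sid D (hunit D a)"
  using assms double_category_axioms by simp_all

lemma sunit_simps [simp]:
  assumes "f \<in> VAr D"
  shows "sunit D f \<in> Sq D" "sdom D (sunit D f) = hunit D (vdom D f)" "scod D (sunit D f) = hunit D (vcod D f)"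
    "sleft D (sunit D f) = f" "sright D (sunit D f) = f"
  using assms double_category_axioms by simp_all

lemma sunit_vcomp:
  assumes "f \<in> VAr D" "g \<in> VAr D" "vcod D f = vdom D g"
  shows "sunit D (vcomp D g f) = scomp D (sunit D g) (sunit D f)"
  using assms double_category_axioms by simp

lemma hcomp_simps [simp]:
  assumes "M \<in> HAr D" "N \<in> HAr D" "htgt D M = hsrc D N"
  shows "hcomp D N M \<in> HAr D" "hsrc D (hcomp D N M) = hsrc D M" "htgt D (hcomp D N M) = htgt D N"
    "shcomp D (sid D N) (sid D M) = sid D (hcomp D N M)"
  using assms double_category_axioms by simp_all

lemma shcomp_simps [simp]:
  assumes "\<alpha> \<in> Sq D" "\<beta> \<in> Sq D" "sright D \<alpha> = sleft D \<beta>"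
  shows "shcomp D \<beta> \<alpha> \<in> Sq D"
    "sdom D (shcomp D \<beta> \<alpha>) = hcomp D (sdom D \<beta>) (sdom D \<alpha>)"
    "scod D (shcomp D \<beta> \<alpha>) = hcomp D (scod D \<beta>) (scod D \<alpha>)"
    "sleft D (shcomp D \<beta> \<alpha>) = sleft D \<alpha>" "sright D (shcomp D \<beta> \<alpha>) = sright D \<beta>"
  using assms double_category_axioms by simp_all

lemma shcomp_composable:
  assumes "\<alpha> \<in> Sq D" "\<beta> \<in> Sq D" "sright D \<alpha> = sleft D \<beta>"
  shows "htgt D (sdom D \<alpha>) = hsrc D (sdom D \<beta>)" "htgt D (scod D \<alpha>) = hsrc D (scod D \<beta>)"
  using sleft_sright_simps[OF assms(1)] sleft_sright_simps[OF assms(2)] assms(3) by metis+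

lemma interchange:
  assumes "\<alpha> \<in> Sq D" "\<alpha>' \<in> Sq D" "\<beta> \<in> Sq D" "\<beta>' \<in> Sq D"
    "scod D \<alpha> = sdom D \<alpha>'" "scod D \<beta> = sdom D \<beta>'" "sright D \<alpha> = sleft D \<beta>" "sright D \<alpha>' = sleft D \<beta>'"
  shows "shcomp D (scomp D \<beta>' \<beta>) (scomp D \<alpha>' \<alpha>) = scomp D (shcomp D \<beta>' \<alpha>') (shcomp D \<beta> \<alpha>)"
  using assms double_category_axioms by simp

lemma assoc_glob_iso:
  assumes "M \<in> HAr D" "N \<in> HAr D" "P \<in> HAr D" "htgt D M = hsrc D N" "htgt D N = hsrc D P"
  shows "glob_iso D (assoc D P N M) (hcomp D (hcomp D P N) M) (hcomp D P (hcomp D N M))"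
  using assms double_category_axioms by simp

lemma unit_glob_iso:
  assumes "M \<in> HAr D"
  shows "glob_iso D (lunit D M) (hcomp D (hunit D (htgt D M)) M) M"
    "glob_iso D (runit D M) (hcomp D M (hunit D (hsrc D M))) M"
  using assms double_category_axioms by simp_all

lemma assoc_natural:
  assumes "\<alpha> \<in> Sq D" "\<beta> \<in> Sq D" "\<gamma> \<in> Sq D" "sright D \<alpha> = sleft D \<beta>" "sright D \<beta> = sleft D \<gamma>"
  shows "scomp D (assoc D (scod D \<gamma>) (scod D \<beta>) (scod D \<alpha>)) (shcomp D (shcomp D \<gamma> \<beta>) \<alpha>) =
    scomp D (shcomp D \<gamma> (shcomp D \<beta> \<alpha>)) (assoc D (sdom D \<gamma>) (sdom D \<beta>) (sdom D \<alpha>))"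
  using assms double_category_axioms by simp

lemma unit_natural:
  assumes "\<alpha> \<in> Sq D"
  shows "scomp D (lunit D (scod D \<alpha>)) (shcomp D (sunit D (sright D \<alpha>)) \<alpha>) = scomp D \<alpha> (lunit D (sdom D \<alpha>))"
    "scomp D (runit D (scod D \<alpha>)) (shcomp D \<alpha> (sunit D (sleft D \<alpha>))) = scomp D \<alpha> (runit D (sdom D \<alpha>))"
  using assms double_category_axioms by simp_all

lemma pentagon:
  assumes "M \<in> HAr D" "N \<in> HAr D" "P \<in> HAr D" "Q \<in> HAr D"
    "htgt D M = hsrc D N" "htgt D N = hsrc D P" "htgt D P = hsrc D Q"
  shows "scomp D (assoc D Q P (hcomp D N M)) (assoc D (hcomp D Q P) N M) =
    scomp D (shcomp D (sid D Q) (assoc D P N M))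
      (scomp D (assoc D Q (hcomp D P N) M) (shcomp D (assoc D Q P N) (sid D M)))"
  using assms double_category_axioms by simp

lemma triangle:
  assumes "M \<in> HAr D" "N \<in> HAr D" "htgt D M = hsrc D N"
  shows "scomp D (shcomp D (sid D N) (lunit D M)) (assoc D N (hunit D (htgt D M)) M) =
    shcomp D (runit D N) (sid D M)"
  using assms double_category_axioms by simp

section \<open>Globular isomorphisms\<close>

lemma glob_isoD:
  assumes "glob_iso D \<theta> X Y"
  shows "\<theta> \<in> Sq D" "sdom D \<theta> = X" "scod D \<theta> = Y"
    "sleft D \<theta> = vid D (hsrc D X)" "sright D \<theta> = vid D (htgt D X)"
  using assms unfolding glob_iso_def by auto

lemma glob_iso_boundary:
  assumes "glob_iso D \<theta> X Y"
  shows "X \<in> HAr D" "Y \<in> HAr D" "hsrc D Y = hsrc D X" "htgt D Y = htgt D X"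
  using sleft_sright_simps[OF glob_isoD(1)[OF assms]] glob_isoD[OF assms]
  by (metis hsrc_htgt_in_Ob sdom_scod_in_HAr vid_simps(3))+

lemma glob_iso_sinv:
  assumes "glob_iso D \<theta> X Y"
  shows "glob_iso D (sinv D \<theta>) Y X" "scomp D (sinv D \<theta>) \<theta> = sid D X" "scomp D \<theta> (sinv D \<theta>) = sid D Y"
proof -
  note \<theta> = glob_isoD[OF assms] glob_iso_boundary(3,4)[OF assms]
  have "\<exists>\<psi>. \<psi> \<in> Sq D \<and> sdom D \<psi> = scod D \<theta> \<and> scod D \<psi> = sdom D \<theta> \<and>
      scomp D \<psi> \<theta> = sid D (sdom D \<theta>) \<and> scomp D \<theta> \<psi> = sid D (scod D \<theta>)"
    using assms \<theta> unfolding glob_iso_def by auto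
  then have \<psi>: "sinv D \<theta> \<in> Sq D" "sdom D (sinv D \<theta>) = Y" "scod D (sinv D \<theta>) = X"
      "scomp D (sinv D \<theta>) \<theta> = sid D X" "scomp D \<theta> (sinv D \<theta>) = sid D Y"
    unfolding sinv_def using \<theta> by (smt (verit) someI_ex)+
  have X: "X \<in> HAr D" using \<theta> by (metis sdom_scod_in_HAr(1))
  have "sleft D (sinv D \<theta>) = vcomp D (sleft D (sinv D \<theta>)) (sleft D \<theta>)"
    using \<psi>(1-3) \<theta> X by simp
  also have "\<dots> = sleft D (scomp D (sinv D \<theta>) \<theta>)"
    using \<psi>(1-3) \<theta> by simp
  also have "\<dots> = vid D (hsrc D Y)"
    unfolding \<psi>(4) using \<theta> X by simp
  finally have left: "sleft D (sinv D \<theta>) = vid D (hsrc D Y)" .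
  have "sright D (sinv D \<theta>) = vcomp D (sright D (sinv D \<theta>)) (sright D \<theta>)"
    using \<psi>(1-3) \<theta> X by simp
  also have "\<dots> = sright D (scomp D (sinv D \<theta>) \<theta>)"
    using \<psi>(1-3) \<theta> by simp
  also have "\<dots> = vid D (htgt D Y)"
    unfolding \<psi>(4) using \<theta> X by simp
  finally have "sright D (sinv D \<theta>) = vid D (htgt D Y)" .
  with left show "glob_iso D (sinv D \<theta>) Y X"
    unfolding glob_iso_def using \<psi> \<theta> by auto
  show "scomp D (sinv D \<theta>) \<theta> = sid D X" "scomp D \<theta> (sinv D \<theta>) = sid D Y"
    by (fact \<psi>)+
qed

lemma glob_iso_simps:
  assumes "glob_iso D \<theta> X Y"
  shows "\<theta> \<in> Sq D" "sdom D \<theta> = X" "scod D \<theta> = Y"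
    "sleft D \<theta> = vid D (hsrc D X)" "sright D \<theta> = vid D (htgt D X)"
    "sinv D \<theta> \<in> Sq D" "sdom D (sinv D \<theta>) = Y" "scod D (sinv D \<theta>) = X"
    "sleft D (sinv D \<theta>) = vid D (hsrc D X)" "sright D (sinv D \<theta>) = vid D (htgt D X)"
    "scomp D (sinv D \<theta>) \<theta> = sid D X" "scomp D \<theta> (sinv D \<theta>) = sid D Y"
  using glob_isoD[OF assms] glob_isoD[OF glob_iso_sinv(1)[OF assms]] glob_iso_boundary(3,4)[OF assms]
    glob_iso_sinv(2,3)[OF assms]
  by simp_all

lemma glob_iso_cancel:
  assumes "glob_iso D \<theta> X Y" "x \<in> Sq D"
  shows "scod D x = X \<Longrightarrow> scomp D (sinv D \<theta>) (scomp D \<theta> x) = x"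
    "scod D x = Y \<Longrightarrow> scomp D \<theta> (scomp D (sinv D \<theta>) x) = x"
  using assms glob_iso_simps[OF assms(1)] glob_iso_boundary[OF assms(1)] by (simp_all flip: scomp_assoc)

lemma glob_iso_cancel_right:
  assumes "glob_iso D \<theta> X Y" "x \<in> Sq D" "y \<in> Sq D" "sdom D x = Y" "sdom D y = Y"
    "scomp D x \<theta> = scomp D y \<theta>"
  shows "x = y"
proof -
  note \<theta> = glob_iso_simps[OF assms(1)] glob_iso_boundary[OF assms(1)]
  have "x = scomp D (scomp D x \<theta>) (sinv D \<theta>)"
    using assms(2,4) \<theta> by simp
  also have "\<dots> = y"
    unfolding assms(6) using assms \<theta> by simp
  finally show ?thesis .
qed

lemma glob_iso_cancel_left:
  assumes "glob_iso D \<theta> X Y" "x \<in> Sq D" "y \<in> Sq D" "scod D x = X" "scod D y = X"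
    "scomp D \<theta> x = scomp D \<theta> y"
  shows "x = y"
  by (metis assms glob_iso_cancel(1))

lemma glob_iso_scomp_eq_iff:
  assumes "glob_iso D \<theta> X Y" "x \<in> Sq D" "y \<in> Sq D" "scod D x = X" "scod D y = Y"
  shows "scomp D \<theta> x = y \<longleftrightarrow> x = scomp D (sinv D \<theta>) y"
  using glob_iso_cancel[OF assms(1)] assms by auto

lemma glob_iso_commute_sinv:
  assumes "glob_iso D \<theta> Y Y'" "glob_iso D \<phi> X X'" "x \<in> Sq D" "y \<in> Sq D"
    "sdom D x = X" "scod D x = Y" "sdom D y = X'" "scod D y = Y'"
    "scomp D \<theta> x = scomp D y \<phi>"
  shows "scomp D x (sinv D \<phi>) = scomp D (sinv D \<theta>) y"
proof -
  note \<theta> = glob_iso_simps[OF assms(1)] glob_iso_boundary[OF assms(1)]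
    and \<phi> = glob_iso_simps[OF assms(2)] glob_iso_boundary[OF assms(2)]
  have "scomp D x (sinv D \<phi>) = scomp D (sinv D \<theta>) (scomp D (scomp D \<theta> x) (sinv D \<phi>))"
    using assms(3-8) \<theta> \<phi> glob_iso_cancel(1)[OF assms(1)] by simp
  also have "\<dots> = scomp D (sinv D \<theta>) y"
    unfolding assms(9) using assms \<theta> \<phi> by simp
  finally show ?thesis .
qed

lemma glob_iso_sinv_eqI:
  assumes "glob_iso D \<theta> X Y" "\<psi> \<in> Sq D" "sdom D \<psi> = Y" "scomp D \<psi> \<theta> = sid D X"
  shows "sinv D \<theta> = \<psi>"
proof -
  note \<theta> = glob_iso_simps[OF assms(1)] glob_iso_boundary[OF assms(1)]
  have "scod D \<psi> = X"
    using assms \<theta> by (metis scomp_simps(3) sid_simps(3))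
  then have "\<psi> = scomp D (scomp D \<psi> \<theta>) (sinv D \<theta>)"
    using assms(2,3) \<theta> by simp
  then show ?thesis
    unfolding assms(4) using \<theta> by simp
qed

lemma glob_iso_sid:
  assumes "M \<in> HAr D"
  shows "glob_iso D (sid D M) M M" "sinv D (sid D M) = sid D M"
proof -
  show gi: "glob_iso D (sid D M) M M"
    unfolding glob_iso_def using assms by (auto intro: bexI[of _ "sid D M"])
  show "sinv D (sid D M) = sid D M"
    using glob_iso_sinv_eqI[OF gi] assms by simp
qed

lemma glob_iso_scomp:
  assumes "glob_iso D \<theta> X Y" "glob_iso D \<phi> Y Z"
  shows "glob_iso D (scomp D \<phi> \<theta>) X Z" "sinv D (scomp D \<phi> \<theta>) = scomp D (sinv D \<theta>) (sinv D \<phi>)"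
proof -
  note \<theta> = glob_iso_simps[OF assms(1)] glob_iso_boundary[OF assms(1)]
    and \<phi> = glob_iso_simps[OF assms(2)] glob_iso_boundary[OF assms(2)]
  have inv: "scomp D (scomp D (sinv D \<theta>) (sinv D \<phi>)) (scomp D \<phi> \<theta>) = sid D X"
    using \<theta> \<phi> glob_iso_cancel(1)[OF assms(2)] by simp
  moreover have "scomp D (scomp D \<phi> \<theta>) (scomp D (sinv D \<theta>) (sinv D \<phi>)) = sid D Z"
    using \<theta> \<phi> glob_iso_cancel(2)[OF assms(1)] by simp
  ultimately show gi: "glob_iso D (scomp D \<phi> \<theta>) X Z"
    unfolding glob_iso_def using \<theta> \<phi> by (auto intro!: bexI[of _ "scomp D (sinv D \<theta>) (sinv D \<phi>)"])
  show "sinv D (scomp D \<phi> \<theta>) = scomp D (sinv D \<theta>) (sinv D \<phi>)"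
    using glob_iso_sinv_eqI[OF gi] inv \<theta> \<phi> by simp
qed

lemma glob_iso_shcomp:
  assumes "glob_iso D \<theta> X Y" "glob_iso D \<phi> X' Y'" "htgt D X = hsrc D X'"
  shows "glob_iso D (shcomp D \<phi> \<theta>) (hcomp D X' X) (hcomp D Y' Y)"
    "sinv D (shcomp D \<phi> \<theta>) = shcomp D (sinv D \<phi>) (sinv D \<theta>)"
proof -
  note \<theta> = glob_iso_simps[OF assms(1)] glob_iso_boundary[OF assms(1)]
    and \<phi> = glob_iso_simps[OF assms(2)] glob_iso_boundary[OF assms(2)]
  have inv: "scomp D (shcomp D (sinv D \<phi>) (sinv D \<theta>)) (shcomp D \<phi> \<theta>) = sid D (hcomp D X' X)"
    using \<theta> \<phi> assms(3) by (simp flip: interchange)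
  moreover have "scomp D (shcomp D \<phi> \<theta>) (shcomp D (sinv D \<phi>) (sinv D \<theta>)) = sid D (hcomp D Y' Y)"
    using \<theta> \<phi> assms(3) by (simp flip: interchange)
  ultimately show gi: "glob_iso D (shcomp D \<phi> \<theta>) (hcomp D X' X) (hcomp D Y' Y)"
    unfolding glob_iso_def using \<theta> \<phi> assms(3)
    by (auto intro!: bexI[of _ "shcomp D (sinv D \<phi>) (sinv D \<theta>)"])
  show "sinv D (shcomp D \<phi> \<theta>) = shcomp D (sinv D \<phi>) (sinv D \<theta>)"
    using glob_iso_sinv_eqI[OF gi] inv \<theta> \<phi> assms(3) by simp
qed

lemmas assoc_simps [simp] =
  glob_iso_simps[OF assoc_glob_iso] glob_iso_cancel[OF assoc_glob_iso]
lemmas lunit_simps [simp] =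
  glob_iso_simps[OF unit_glob_iso(1)] glob_iso_cancel[OF unit_glob_iso(1)]
lemmas runit_simps [simp] =
  glob_iso_simps[OF unit_glob_iso(2)] glob_iso_cancel[OF unit_glob_iso(2)]

lemma shcomp_sunit_cancel_right:
  assumes "\<alpha> \<in> Sq D" "\<beta> \<in> Sq D" "sdom D \<alpha> = sdom D \<beta>" "scod D \<alpha> = scod D \<beta>" "sleft D \<alpha> = sleft D \<beta>"
    "shcomp D \<alpha> (sunit D (sleft D \<alpha>)) = shcomp D \<beta> (sunit D (sleft D \<beta>))"
  shows "\<alpha> = \<beta>"
proof (rule glob_iso_cancel_right[OF unit_glob_iso(2)])
  show "scomp D \<alpha> (runit D (sdom D \<alpha>)) = scomp D \<beta> (runit D (sdom D \<alpha>))"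
    using unit_natural(2)[OF assms(1)] unit_natural(2)[OF assms(2)] assms by simp
qed (use assms in simp_all)

lemma shcomp_sunit_cancel_left:
  assumes "\<alpha> \<in> Sq D" "\<beta> \<in> Sq D" "sdom D \<alpha> = sdom D \<beta>" "scod D \<alpha> = scod D \<beta>" "sright D \<alpha> = sright D \<beta>"
    "shcomp D (sunit D (sright D \<alpha>)) \<alpha> = shcomp D (sunit D (sright D \<beta>)) \<beta>"
  shows "\<alpha> = \<beta>"
proof (rule glob_iso_cancel_right[OF unit_glob_iso(1)])
  show "scomp D \<alpha> (lunit D (sdom D \<alpha>)) = scomp D \<beta> (lunit D (sdom D \<alpha>))"
    using unit_natural(1)[OF assms(1)] unit_natural(1)[OF assms(2)] assms by simp
qed (use assms in simp_all)

text \<open>Kelly's unit coherences. Whiskering with a unit is faithful on squares with identity sides,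
  and after whiskering both equations follow from the pentagon and the triangle.\<close>

lemma runit_hcomp:
  assumes X: "X \<in> HAr D" and Y: "Y \<in> HAr D" and XY: "htgt D Y = hsrc D X"
  shows "runit D (hcomp D X Y) = scomp D (shcomp D (sid D X) (runit D Y)) (assoc D X Y (hunit D (hsrc D Y)))"
proof (rule shcomp_sunit_cancel_right)
  let ?I = "hunit D (hsrc D Y)"
  let ?\<rho> = "shcomp D (sid D X) (runit D Y)" and ?a = "assoc D X Y ?I"
  note H = X Y XY
  have "scomp D (shcomp D (sid D Y) (lunit D ?I)) (assoc D Y ?I ?I) = shcomp D (runit D Y) (sid D ?I)"
    using triangle[of ?I Y] H by simp
  then have triangle_X: "scomp D (shcomp D (sid D X) (shcomp D (sid D Y) (lunit D ?I)))
      (shcomp D (sid D X) (assoc D Y ?I ?I)) = shcomp D (sid D X) (shcomp D (runit D Y) (sid D ?I))"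
    using interchange[of "assoc D Y ?I ?I" "shcomp D (sid D Y) (lunit D ?I)" "sid D X" "sid D X"] H by simp
  have natural: "scomp D ?a (shcomp D ?\<rho> (sid D ?I)) =
      scomp D (shcomp D (sid D X) (shcomp D (runit D Y) (sid D ?I))) (assoc D X (hcomp D Y ?I) ?I)"
    using assoc_natural[of "sid D ?I" "runit D Y" "sid D X"] H by simp
  have "scomp D ?a (shcomp D (runit D (hcomp D X Y)) (sid D ?I)) =
      scomp D (scomp D ?a (shcomp D (sid D (hcomp D X Y)) (lunit D ?I))) (assoc D (hcomp D X Y) ?I ?I)"
    using triangle[of ?I "hcomp D X Y"] H by simp
  also have "\<dots> = scomp D (shcomp D (sid D X) (shcomp D (sid D Y) (lunit D ?I)))
      (scomp D (assoc D X Y (hcomp D ?I ?I)) (assoc D (hcomp D X Y) ?I ?I))"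
    using assoc_natural[of "lunit D ?I" "sid D Y" "sid D X"] H by simp
  also have "\<dots> = scomp D (scomp D (shcomp D (sid D X) (shcomp D (sid D Y) (lunit D ?I)))
      (shcomp D (sid D X) (assoc D Y ?I ?I))) (scomp D (assoc D X (hcomp D Y ?I) ?I) (shcomp D ?a (sid D ?I)))"
    using pentagon[of ?I ?I Y X] H by simp
  also have "\<dots> = scomp D (scomp D ?a (shcomp D ?\<rho> (sid D ?I))) (shcomp D ?a (sid D ?I))"
    unfolding triangle_X natural using H by simp
  also have "\<dots> = scomp D ?a (shcomp D (scomp D ?\<rho> ?a) (sid D ?I))"
    using interchange[of "sid D ?I" "sid D ?I" ?a ?\<rho>] H by simp
  finally have "scomp D ?a (shcomp D (runit D (hcomp D X Y)) (sid D ?I)) =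
      scomp D ?a (shcomp D (scomp D ?\<rho> ?a) (sid D ?I))" .
  then have "shcomp D (runit D (hcomp D X Y)) (sid D ?I) = shcomp D (scomp D ?\<rho> ?a) (sid D ?I)"
    by (rule glob_iso_cancel_left[OF assoc_glob_iso, rotated -1]) (use H in simp_all)
  then show "shcomp D (runit D (hcomp D X Y)) (sunit D (sleft D (runit D (hcomp D X Y)))) =
      shcomp D (scomp D ?\<rho> ?a) (sunit D (sleft D (scomp D ?\<rho> ?a)))"
    using H by simp
qed (use X Y XY in simp_all)

lemma lunit_hcomp_whiskered:
  assumes X: "X \<in> HAr D" and Y: "Y \<in> HAr D" and XY: "htgt D Y = hsrc D X"
  defines "I \<equiv> hunit D (htgt D X)"
  shows "scomp D (shcomp D (sid D I) (scomp D (lunit D (hcomp D X Y)) (assoc D I X Y)))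
      (scomp D (assoc D I (hcomp D I X) Y) (shcomp D (assoc D I I X) (sid D Y))) =
    scomp D (shcomp D (sid D I) (shcomp D (lunit D X) (sid D Y)))
      (scomp D (assoc D I (hcomp D I X) Y) (shcomp D (assoc D I I X) (sid D Y)))"
proof -
  let ?I = "hunit D (htgt D X)"
  let ?P1 = "assoc D ?I (hcomp D ?I X) Y" and ?P2 = "shcomp D (assoc D ?I ?I X) (sid D Y)"
  let ?L = "shcomp D (lunit D X) (sid D Y)"
  note H = X Y XY
  have pentagon_IIXY: "scomp D (assoc D ?I ?I (hcomp D X Y)) (assoc D (hcomp D ?I ?I) X Y) =
      scomp D (shcomp D (sid D ?I) (assoc D ?I X Y)) (scomp D ?P1 ?P2)"
    using pentagon[of Y X ?I ?I] H by simp
  have triangle_IXY: "scomp D (shcomp D (sid D ?I) (lunit D (hcomp D X Y))) (assoc D ?I ?I (hcomp D X Y)) =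
      shcomp D (runit D ?I) (sid D (hcomp D X Y))"
    using triangle[of "hcomp D X Y" ?I] H by simp
  have natural_runit: "scomp D (assoc D ?I X Y) (shcomp D (shcomp D (runit D ?I) (sid D X)) (sid D Y)) =
      scomp D (shcomp D (runit D ?I) (sid D (hcomp D X Y))) (assoc D (hcomp D ?I ?I) X Y)"
    using assoc_natural[of "sid D Y" "sid D X" "runit D ?I"] H by simp
  have "scomp D (shcomp D (sid D ?I) (lunit D X)) (assoc D ?I ?I X) = shcomp D (runit D ?I) (sid D X)"
    using triangle[of X ?I] H by simp
  then have triangle_IXY': "shcomp D (shcomp D (runit D ?I) (sid D X)) (sid D Y) =
      scomp D (shcomp D (shcomp D (sid D ?I) (lunit D X)) (sid D Y)) ?P2"
    using interchange[of "sid D Y" "sid D Y" "assoc D ?I ?I X" "shcomp D (sid D ?I) (lunit D X)"] H by simp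
  have natural_lunit: "scomp D (assoc D ?I X Y) (shcomp D (shcomp D (sid D ?I) (lunit D X)) (sid D Y)) =
      scomp D (shcomp D (sid D ?I) ?L) ?P1"
    using assoc_natural[of "sid D Y" "lunit D X" "sid D ?I"] H by simp
  have "scomp D (shcomp D (sid D ?I) (scomp D (lunit D (hcomp D X Y)) (assoc D ?I X Y))) (scomp D ?P1 ?P2) =
      scomp D (shcomp D (sid D ?I) (lunit D (hcomp D X Y))) (scomp D (shcomp D (sid D ?I) (assoc D ?I X Y)) (scomp D ?P1 ?P2))"
    using interchange[of "assoc D ?I X Y" "lunit D (hcomp D X Y)" "sid D ?I" "sid D ?I"] H by simp
  also have "\<dots> = scomp D (scomp D (shcomp D (sid D ?I) (lunit D (hcomp D X Y))) (assoc D ?I ?I (hcomp D X Y)))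
      (assoc D (hcomp D ?I ?I) X Y)"
    unfolding pentagon_IIXY[symmetric] using H by simp
  also have "\<dots> = scomp D (assoc D ?I X Y) (shcomp D (shcomp D (runit D ?I) (sid D X)) (sid D Y))"
    unfolding triangle_IXY natural_runit ..
  also have "\<dots> = scomp D (scomp D (assoc D ?I X Y) (shcomp D (shcomp D (sid D ?I) (lunit D X)) (sid D Y))) ?P2"
    unfolding triangle_IXY' using H by simp
  also have "\<dots> = scomp D (shcomp D (sid D ?I) ?L) (scomp D ?P1 ?P2)"
    unfolding natural_lunit using H by simp
  finally show ?thesis
    unfolding I_def .
qed

lemma lunit_hcomp:
  assumes X: "X \<in> HAr D" and Y: "Y \<in> HAr D" and XY: "htgt D Y = hsrc D X"
  shows "scomp D (lunit D (hcomp D X Y)) (assoc D (hunit D (htgt D X)) X Y) = shcomp D (lunit D X) (sid D Y)"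
    (is "?K = ?L")
proof (rule shcomp_sunit_cancel_left)
  let ?I = "hunit D (htgt D X)"
  let ?P1 = "assoc D ?I (hcomp D ?I X) Y" and ?P2 = "shcomp D (assoc D ?I ?I X) (sid D Y)"
  note H = X Y XY
  have "glob_iso D (scomp D ?P1 ?P2) (hcomp D (hcomp D (hcomp D ?I ?I) X) Y) (hcomp D ?I (hcomp D (hcomp D ?I X) Y))"
    using glob_iso_scomp(1)[OF glob_iso_shcomp(1)[OF glob_iso_sid(1)[of Y] assoc_glob_iso[of X ?I ?I]]
        assoc_glob_iso[of Y "hcomp D ?I X" ?I]] H
    by simp
  then have "shcomp D (sid D ?I) ?K = shcomp D (sid D ?I) ?L"
    by (rule glob_iso_cancel_right[OF _ _ _ _ _ lunit_hcomp_whiskered[OF H]]) (use H in simp_all)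
  then show "shcomp D (sunit D (sright D ?K)) ?K = shcomp D (sunit D (sright D ?L)) ?L"
    using H by simp
qed (use X Y XY in simp_all)

section \<open>Cartesian squares and restrictions\<close>

definition cartesian_sq :: "'s \<Rightarrow> bool" where
  "cartesian_sq e \<longleftrightarrow> e \<in> Sq D \<and> (\<forall>\<alpha> g g'. \<alpha> \<in> Sq D \<and> scod D \<alpha> = scod D e \<and> g \<in> VAr D \<and> g' \<in> VAr D \<and>
      vcod D g = hsrc D (sdom D e) \<and> vcod D g' = htgt D (sdom D e) \<and>
      sleft D \<alpha> = vcomp D (sleft D e) g \<and> sright D \<alpha> = vcomp D (sright D e) g' \<longrightarrow>
      (\<exists>!\<beta>. \<beta> \<in> Sq D \<and> scod D \<beta> = sdom D e \<and> sleft D \<beta> = g \<and> sright D \<beta> = g' \<and> scomp D e \<beta> = \<alpha>))"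

lemma cartesian_sq_in_Sq: "cartesian_sq e \<Longrightarrow> e \<in> Sq D"
  unfolding cartesian_sq_def by (rule conjunct1)

lemma cartesian_sqI:
  assumes "e \<in> Sq D"
    and "\<And>\<alpha> g g'. \<lbrakk>\<alpha> \<in> Sq D; scod D \<alpha> = scod D e; g \<in> VAr D; g' \<in> VAr D;
      vcod D g = hsrc D (sdom D e); vcod D g' = htgt D (sdom D e);
      sleft D \<alpha> = vcomp D (sleft D e) g; sright D \<alpha> = vcomp D (sright D e) g'\<rbrakk> \<Longrightarrow>
      \<exists>!\<beta>. \<beta> \<in> Sq D \<and> scod D \<beta> = sdom D e \<and> sleft D \<beta> = g \<and> sright D \<beta> = g' \<and> scomp D e \<beta> = \<alpha>"
  shows "cartesian_sq e"
  using assms unfolding cartesian_sq_def by blast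

lemma cartesian_sq_ex1:
  assumes "cartesian_sq e" "\<alpha> \<in> Sq D" "scod D \<alpha> = scod D e" "g \<in> VAr D" "g' \<in> VAr D"
    "vcod D g = hsrc D (sdom D e)" "vcod D g' = htgt D (sdom D e)"
    "sleft D \<alpha> = vcomp D (sleft D e) g" "sright D \<alpha> = vcomp D (sright D e) g'"
  shows "\<exists>!\<beta>. \<beta> \<in> Sq D \<and> scod D \<beta> = sdom D e \<and> sleft D \<beta> = g \<and> sright D \<beta> = g' \<and> scomp D e \<beta> = \<alpha>"
  using assms unfolding cartesian_sq_def by blast

lemma cartesian_sqE:
  assumes "cartesian_sq e" "\<alpha> \<in> Sq D" "scod D \<alpha> = scod D e" "g \<in> VAr D" "g' \<in> VAr D"
    "vcod D g = hsrc D (sdom D e)" "vcod D g' = htgt D (sdom D e)"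
    "sleft D \<alpha> = vcomp D (sleft D e) g" "sright D \<alpha> = vcomp D (sright D e) g'"
  obtains \<beta> where "\<beta> \<in> Sq D" "scod D \<beta> = sdom D e" "sleft D \<beta> = g" "sright D \<beta> = g'" "scomp D e \<beta> = \<alpha>"
  using ex1_implies_ex[OF cartesian_sq_ex1[OF assms]] by blast

lemma cartesian_sq_cancel:
  assumes "cartesian_sq e" "\<beta>1 \<in> Sq D" "\<beta>2 \<in> Sq D" "scod D \<beta>1 = sdom D e" "scod D \<beta>2 = sdom D e"
    "sleft D \<beta>1 = sleft D \<beta>2" "sright D \<beta>1 = sright D \<beta>2" "scomp D e \<beta>1 = scomp D e \<beta>2"
  shows "\<beta>1 = \<beta>2"
proof -
  have "e \<in> Sq D"
    using assms(1) by (rule cartesian_sq_in_Sq)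
  then have "\<exists>!\<beta>. \<beta> \<in> Sq D \<and> scod D \<beta> = sdom D e \<and> sleft D \<beta> = sleft D \<beta>1 \<and> sright D \<beta> = sright D \<beta>1 \<and>
      scomp D e \<beta> = scomp D e \<beta>1"
    by (intro cartesian_sq_ex1[OF assms(1)]) (use assms(2,4) in simp_all)
  then show ?thesis
    using assms(2-8) by (metis (no_types, lifting))
qed

lemma cartesian_sq_scomp:
  assumes e0: "cartesian_sq e0" and e1: "cartesian_sq e1" and e: "scod D e1 = sdom D e0"
  shows "cartesian_sq (scomp D e0 e1)"
proof -
  have sq: "e0 \<in> Sq D" "e1 \<in> Sq D"
    using e0 e1 by (simp_all add: cartesian_sq_in_Sq)
  show ?thesis
  proof (rule cartesian_sqI)
    fix \<alpha> g g'
    assume \<alpha>: "\<alpha> \<in> Sq D" "scod D \<alpha> = scod D (scomp D e0 e1)" "g \<in> VAr D" "g' \<in> VAr D"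
      "vcod D g = hsrc D (sdom D (scomp D e0 e1))" "vcod D g' = htgt D (sdom D (scomp D e0 e1))"
      "sleft D \<alpha> = vcomp D (sleft D (scomp D e0 e1)) g" "sright D \<alpha> = vcomp D (sright D (scomp D e0 e1)) g'"
    obtain \<beta>0 where \<beta>0: "\<beta>0 \<in> Sq D" "scod D \<beta>0 = sdom D e0" "sleft D \<beta>0 = vcomp D (sleft D e1) g"
        "sright D \<beta>0 = vcomp D (sright D e1) g'" "scomp D e0 \<beta>0 = \<alpha>"
      by (rule cartesian_sqE[OF e0 \<alpha>(1)]) (use \<alpha> sq e in simp_all)
    obtain \<beta> where \<beta>: "\<beta> \<in> Sq D" "scod D \<beta> = sdom D e1" "sleft D \<beta> = g" "sright D \<beta> = g'" "scomp D e1 \<beta> = \<beta>0"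
      by (rule cartesian_sqE[OF e1 \<beta>0(1)]) (use \<alpha> \<beta>0 sq e in simp_all)
    show "\<exists>!\<beta>. \<beta> \<in> Sq D \<and> scod D \<beta> = sdom D (scomp D e0 e1) \<and> sleft D \<beta> = g \<and> sright D \<beta> = g' \<and>
        scomp D (scomp D e0 e1) \<beta> = \<alpha>"
    proof (rule ex1I[of _ \<beta>])
      fix \<beta>' assume "\<beta>' \<in> Sq D \<and> scod D \<beta>' = sdom D (scomp D e0 e1) \<and> sleft D \<beta>' = g \<and> sright D \<beta>' = g' \<and>
        scomp D (scomp D e0 e1) \<beta>' = \<alpha>"
      then have \<beta>': "\<beta>' \<in> Sq D" "scod D \<beta>' = sdom D e1" "sleft D \<beta>' = g" "sright D \<beta>' = g'"
          "scomp D e0 (scomp D e1 \<beta>') = \<alpha>"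
        using sq e by auto
      then have "scomp D e1 \<beta>' = \<beta>0"
        using cartesian_sq_cancel[OF e0, of "scomp D e1 \<beta>'" \<beta>0] \<beta>0 sq e by simp
      then show "\<beta>' = \<beta>"
        using cartesian_sq_cancel[OF e1, of \<beta>' \<beta>] \<beta>' \<beta> sq e by simp
    qed (use \<beta> \<beta>0 sq e in simp)
  qed (use sq e in simp)
qed

lemma companionD:
  assumes "companion D f fh p1 p2"
  shows "f \<in> VAr D" "fh \<in> HAr D" "p1 \<in> Sq D" "p2 \<in> Sq D" "hsrc D fh = vdom D f" "htgt D fh = vcod D f"
    "sdom D p1 = fh" "scod D p1 = hunit D (vcod D f)" "sleft D p1 = f" "sright D p1 = vid D (vcod D f)"
    "sdom D p2 = hunit D (vdom D f)" "scod D p2 = fh" "sleft D p2 = vid D (vdom D f)" "sright D p2 = f"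
    "scomp D p1 p2 = sunit D f" "scomp D (lunit D fh) (shcomp D p1 p2) = runit D fh"
  using assms sleft_sright_simps[of p1] unfolding companion_def by auto

lemma conjointD:
  assumes "conjoint D f fc q1 q2"
  shows "f \<in> VAr D" "fc \<in> HAr D" "q1 \<in> Sq D" "q2 \<in> Sq D" "hsrc D fc = vcod D f" "htgt D fc = vdom D f"
    "sdom D q1 = fc" "scod D q1 = hunit D (vcod D f)" "sleft D q1 = vid D (vcod D f)" "sright D q1 = f"
    "sdom D q2 = hunit D (vdom D f)" "scod D q2 = fc" "sleft D q2 = f" "sright D q2 = vid D (vdom D f)"
    "scomp D q1 q2 = sunit D f" "scomp D (runit D fc) (shcomp D q2 q1) = lunit D fc"
  using assms sleft_sright_simps[of q1] unfolding conjoint_def by auto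

lemma companion_restriction_unit:
  assumes fh: "companion D f fh p1 p2" and N: "N \<in> HAr D" "vcod D f = hsrc D N"
  shows "shcomp D (scomp D (runit D N) (shcomp D (sid D N) p1)) p2 = runit D (hcomp D N fh)"
proof -
  note H = N companionD[OF fh]
  let ?I = "hunit D (hsrc D N)" and ?J = "hunit D (vdom D f)"
  have triangle_N: "scomp D (shcomp D (runit D N) (sid D fh)) (sinv D (assoc D N ?I fh)) =
      shcomp D (sid D N) (lunit D fh)"
  proof -
    have "scomp D (shcomp D (runit D N) (sid D fh)) (sinv D (assoc D N ?I fh)) =
        scomp D (scomp D (shcomp D (sid D N) (lunit D fh)) (assoc D N ?I fh)) (sinv D (assoc D N ?I fh))"
      using triangle[of fh N] H by simp
    also have "\<dots> = shcomp D (sid D N) (lunit D fh)"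
      using H by simp
    finally show ?thesis .
  qed
  have "shcomp D (scomp D (runit D N) (shcomp D (sid D N) p1)) p2 =
      scomp D (shcomp D (runit D N) (sid D fh)) (shcomp D (shcomp D (sid D N) p1) p2)"
    using interchange[of p2 "sid D fh" "shcomp D (sid D N) p1" "runit D N"] H by simp
  also have "\<dots> = scomp D (shcomp D (runit D N) (sid D fh))
      (scomp D (sinv D (assoc D N ?I fh)) (scomp D (assoc D N ?I fh) (shcomp D (shcomp D (sid D N) p1) p2)))"
    using H by simp
  also have "\<dots> = scomp D (shcomp D (runit D N) (sid D fh))
      (scomp D (sinv D (assoc D N ?I fh)) (scomp D (shcomp D (sid D N) (shcomp D p1 p2)) (assoc D N fh ?J)))"
    using assoc_natural[of p2 p1 "sid D N"] H by simp
  also have "\<dots> = scomp D (scomp D (shcomp D (sid D N) (lunit D fh)) (shcomp D (sid D N) (shcomp D p1 p2)))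
      (assoc D N fh ?J)"
    unfolding triangle_N[symmetric] using H by simp
  also have "\<dots> = scomp D (shcomp D (sid D N) (runit D fh)) (assoc D N fh ?J)"
    using interchange[of "shcomp D p1 p2" "lunit D fh" "sid D N" "sid D N"] H by simp
  also have "\<dots> = runit D (hcomp D N fh)"
    using runit_hcomp[of N fh] H by simp
  finally show ?thesis .
qed

lemma companion_restriction_cartesian:
  assumes fh: "companion D f fh p1 p2" and N: "N \<in> HAr D" "vcod D f = hsrc D N"
  shows "cartesian_sq (scomp D (runit D N) (shcomp D (sid D N) p1))" (is "cartesian_sq ?e")
proof (rule cartesian_sqI)
  note H = N companionD[OF fh]
  fix \<alpha> g g'
  assume "\<alpha> \<in> Sq D" "scod D \<alpha> = scod D ?e" "g \<in> VAr D" "g' \<in> VAr D"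
    "vcod D g = hsrc D (sdom D ?e)" "vcod D g' = htgt D (sdom D ?e)"
    "sleft D \<alpha> = vcomp D (sleft D ?e) g" "sright D \<alpha> = vcomp D (sright D ?e) g'"
  then have \<alpha>: "\<alpha> \<in> Sq D" "scod D \<alpha> = N" "g \<in> VAr D" "g' \<in> VAr D" "vcod D g = vdom D f"
      "vcod D g' = htgt D N" "sleft D \<alpha> = vcomp D f g" "sright D \<alpha> = g'"
      "hsrc D (sdom D \<alpha>) = vdom D g" "htgt D (sdom D \<alpha>) = vdom D g'"
    using H sleft_sright_simps[of \<alpha>] by auto
  \<comment> \<open>the factorisation exists because \<open>p1 \<circ> p2 = sunit f\<close>\<close>
  let ?\<beta> = "scomp D (shcomp D \<alpha> (scomp D p2 (sunit D g))) (sinv D (runit D (sdom D \<alpha>)))"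
  show "\<exists>!\<beta>. \<beta> \<in> Sq D \<and> scod D \<beta> = sdom D ?e \<and> sleft D \<beta> = g \<and> sright D \<beta> = g' \<and> scomp D ?e \<beta> = \<alpha>"
  proof (rule ex1I[of _ ?\<beta>])
    have "scomp D ?e ?\<beta> = scomp D (runit D N) (scomp D (shcomp D (scomp D (sid D N) \<alpha>)
        (scomp D p1 (scomp D p2 (sunit D g)))) (sinv D (runit D (sdom D \<alpha>))))"
      using interchange[of "scomp D p2 (sunit D g)" p1 \<alpha> "sid D N"] H \<alpha> by simp
    also have "\<dots> = scomp D (scomp D (runit D N) (shcomp D \<alpha> (sunit D (sleft D \<alpha>)))) (sinv D (runit D (sdom D \<alpha>)))"
      using H \<alpha> by (simp add: sunit_vcomp flip: scomp_assoc)
    also have "\<dots> = \<alpha>"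
      using unit_natural(2)[OF \<alpha>(1)] H \<alpha> by simp
    finally show "?\<beta> \<in> Sq D \<and> scod D ?\<beta> = sdom D ?e \<and> sleft D ?\<beta> = g \<and> sright D ?\<beta> = g' \<and> scomp D ?e ?\<beta> = \<alpha>"
      using H \<alpha> by simp
  next
    fix \<beta> assume "\<beta> \<in> Sq D \<and> scod D \<beta> = sdom D ?e \<and> sleft D \<beta> = g \<and> sright D \<beta> = g' \<and> scomp D ?e \<beta> = \<alpha>"
    then have \<beta>: "\<beta> \<in> Sq D" "scod D \<beta> = hcomp D N fh" "sleft D \<beta> = g" "sright D \<beta> = g'"
        "scomp D ?e \<beta> = \<alpha>" "sdom D \<beta> = sdom D \<alpha>"
      using H by auto
    have "shcomp D \<alpha> (scomp D p2 (sunit D g)) = scomp D (shcomp D ?e p2) (shcomp D \<beta> (sunit D g))"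
      unfolding \<beta>(5)[symmetric] using interchange[of "sunit D g" p2 \<beta> ?e] \<beta> H \<alpha> by simp
    also have "\<dots> = scomp D \<beta> (runit D (sdom D \<alpha>))"
      unfolding companion_restriction_unit[OF fh N] using unit_natural(2)[OF \<beta>(1)] \<beta> H \<alpha> by simp
    finally show "\<beta> = ?\<beta>"
      using \<beta> \<alpha> by simp
  qed
qed (use N companionD[OF fh] in simp)

lemma conjoint_restriction_unit:
  assumes fc: "conjoint D f fc q1 q2" and N: "N \<in> HAr D" "vcod D f = htgt D N"
  shows "shcomp D q2 (scomp D (lunit D N) (shcomp D q1 (sid D N))) = lunit D (hcomp D fc N)"
proof -
  note H = N conjointD[OF fc]
  let ?I = "hunit D (htgt D N)" and ?J = "hunit D (vdom D f)"
  have natural: "scomp D (assoc D fc ?I N) (shcomp D (shcomp D q2 q1) (sid D N)) =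
      scomp D (shcomp D q2 (shcomp D q1 (sid D N))) (assoc D ?J fc N)"
    using assoc_natural[of "sid D N" q1 q2] H by simp
  have triangle_fc: "scomp D (shcomp D (sid D fc) (lunit D N)) (assoc D fc ?I N) = shcomp D (runit D fc) (sid D N)"
    using triangle[of N fc] H by simp
  have zigzag: "scomp D (shcomp D (runit D fc) (sid D N)) (shcomp D (shcomp D q2 q1) (sid D N)) =
      shcomp D (lunit D fc) (sid D N)"
    using interchange[of "sid D N" "sid D N" "shcomp D q2 q1" "runit D fc"] H by simp
  have "shcomp D q2 (scomp D (lunit D N) (shcomp D q1 (sid D N))) =
      scomp D (shcomp D (sid D fc) (lunit D N)) (shcomp D q2 (shcomp D q1 (sid D N)))"
    using interchange[of "shcomp D q1 (sid D N)" "lunit D N" q2 "sid D fc"] H by simp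
  also have "\<dots> = scomp D (shcomp D (sid D fc) (lunit D N))
      (scomp D (scomp D (shcomp D q2 (shcomp D q1 (sid D N))) (assoc D ?J fc N)) (sinv D (assoc D ?J fc N)))"
    using H by simp
  also have "\<dots> = scomp D (scomp D (shcomp D (sid D fc) (lunit D N)) (assoc D fc ?I N))
      (scomp D (shcomp D (shcomp D q2 q1) (sid D N)) (sinv D (assoc D ?J fc N)))"
    unfolding natural[symmetric] using H by simp
  also have "\<dots> = scomp D (scomp D (shcomp D (runit D fc) (sid D N)) (shcomp D (shcomp D q2 q1) (sid D N)))
      (sinv D (assoc D ?J fc N))"
    unfolding triangle_fc using H by simp
  also have "\<dots> = scomp D (scomp D (lunit D (hcomp D fc N)) (assoc D ?J fc N)) (sinv D (assoc D ?J fc N))"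
    unfolding zigzag using lunit_hcomp[of fc N] H by simp
  also have "\<dots> = lunit D (hcomp D fc N)"
    using H by simp
  finally show ?thesis .
qed

lemma conjoint_restriction_cartesian:
  assumes fc: "conjoint D f fc q1 q2" and N: "N \<in> HAr D" "vcod D f = htgt D N"
  shows "cartesian_sq (scomp D (lunit D N) (shcomp D q1 (sid D N)))" (is "cartesian_sq ?e")
proof (rule cartesian_sqI)
  note H = N conjointD[OF fc]
  fix \<alpha> g g'
  assume "\<alpha> \<in> Sq D" "scod D \<alpha> = scod D ?e" "g \<in> VAr D" "g' \<in> VAr D"
    "vcod D g = hsrc D (sdom D ?e)" "vcod D g' = htgt D (sdom D ?e)"
    "sleft D \<alpha> = vcomp D (sleft D ?e) g" "sright D \<alpha> = vcomp D (sright D ?e) g'"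
  then have \<alpha>: "\<alpha> \<in> Sq D" "scod D \<alpha> = N" "g \<in> VAr D" "g' \<in> VAr D" "vcod D g = hsrc D N"
      "vcod D g' = vdom D f" "sleft D \<alpha> = g" "sright D \<alpha> = vcomp D f g'"
      "hsrc D (sdom D \<alpha>) = vdom D g" "htgt D (sdom D \<alpha>) = vdom D g'"
    using H sleft_sright_simps[of \<alpha>] by auto
  let ?\<beta> = "scomp D (shcomp D (scomp D q2 (sunit D g')) \<alpha>) (sinv D (lunit D (sdom D \<alpha>)))"
  show "\<exists>!\<beta>. \<beta> \<in> Sq D \<and> scod D \<beta> = sdom D ?e \<and> sleft D \<beta> = g \<and> sright D \<beta> = g' \<and> scomp D ?e \<beta> = \<alpha>"
  proof (rule ex1I[of _ ?\<beta>])
    have "scomp D ?e ?\<beta> = scomp D (lunit D N) (scomp D (shcomp D (scomp D q1 (scomp D q2 (sunit D g')))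
        (scomp D (sid D N) \<alpha>)) (sinv D (lunit D (sdom D \<alpha>))))"
      using interchange[of \<alpha> "sid D N" "scomp D q2 (sunit D g')" q1] H \<alpha> by simp
    also have "\<dots> = scomp D (scomp D (lunit D N) (shcomp D (sunit D (sright D \<alpha>)) \<alpha>)) (sinv D (lunit D (sdom D \<alpha>)))"
      using H \<alpha> by (simp add: sunit_vcomp flip: scomp_assoc)
    also have "\<dots> = \<alpha>"
      using unit_natural(1)[OF \<alpha>(1)] H \<alpha> by simp
    finally show "?\<beta> \<in> Sq D \<and> scod D ?\<beta> = sdom D ?e \<and> sleft D ?\<beta> = g \<and> sright D ?\<beta> = g' \<and> scomp D ?e ?\<beta> = \<alpha>"
      using H \<alpha> by simp
  next
    fix \<beta> assume "\<beta> \<in> Sq D \<and> scod D \<beta> = sdom D ?e \<and> sleft D \<beta> = g \<and> sright D \<beta> = g' \<and> scomp D ?e \<beta> = \<alpha>"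
    then have \<beta>: "\<beta> \<in> Sq D" "scod D \<beta> = hcomp D fc N" "sleft D \<beta> = g" "sright D \<beta> = g'"
        "scomp D ?e \<beta> = \<alpha>" "sdom D \<beta> = sdom D \<alpha>"
      using H by auto
    have "shcomp D (scomp D q2 (sunit D g')) \<alpha> = scomp D (shcomp D q2 ?e) (shcomp D (sunit D g') \<beta>)"
      unfolding \<beta>(5)[symmetric] using interchange[of \<beta> ?e "sunit D g'" q2] \<beta> H \<alpha> by simp
    also have "\<dots> = scomp D \<beta> (lunit D (sdom D \<alpha>))"
      unfolding conjoint_restriction_unit[OF fc N] using unit_natural(1)[OF \<beta>(1)] \<beta> H \<alpha> by simp
    finally show "\<beta> = ?\<beta>"
      using \<beta> \<alpha> by simp
  qed
qed (use N conjointD[OF fc] in simp)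

lemma cartesian_restriction:
  assumes "has_companion D f" "has_conjoint D g" "N \<in> HAr D" "hsrc D N = vcod D f" "htgt D N = vcod D g"
  obtains R e where "R \<in> HAr D" "hsrc D R = vdom D f" "htgt D R = vdom D g"
    "e \<in> Sq D" "sdom D e = R" "scod D e = N" "sleft D e = f" "sright D e = g" "cartesian_sq e"
proof -
  obtain fh p1 p2 where fh: "companion D f fh p1 p2"
    using assms(1) unfolding has_companion_iff by blast
  obtain gc q1 q2 where gc: "conjoint D g gc q1 q2"
    using assms(2) unfolding has_conjoint_iff by blast
  note H = assms(3-5) companionD[OF fh] conjointD[OF gc]
  define e1 where "e1 = scomp D (runit D N) (shcomp D (sid D N) p1)"
  define e2 where "e2 = scomp D (lunit D (hcomp D N fh)) (shcomp D q1 (sid D (hcomp D N fh)))"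
  have "cartesian_sq e1"
    unfolding e1_def using H by (intro companion_restriction_cartesian[OF fh]) simp_all
  moreover have "cartesian_sq e2"
    unfolding e2_def using H by (intro conjoint_restriction_cartesian[OF gc]) simp_all
  ultimately have "cartesian_sq (scomp D e1 e2)"
    by (rule cartesian_sq_scomp) (use H in \<open>simp add: e1_def e2_def\<close>)
  then show ?thesis
    using that[of "hcomp D gc (hcomp D N fh)" "scomp D e1 e2"] H unfolding e1_def e2_def by simp
qed

end

section \<open>Restriction of monads\<close>

lemma (in pseudo_double) is_monadD:
  assumes "is_monad D (A, M, m, \<eta>)"
  shows "A \<in> Ob D" "M \<in> HAr D" "hsrc D M = A" "htgt D M = A"
    "m \<in> Sq D" "sdom D m = hcomp D M M" "scod D m = M" "sleft D m = vid D A" "sright D m = vid D A"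
    "\<eta> \<in> Sq D" "sdom D \<eta> = hunit D A" "scod D \<eta> = M" "sleft D \<eta> = vid D A" "sright D \<eta> = vid D A"
  using assms unfolding is_monad_def globular_def by simp_all

locale cartesian_monad_restriction = pseudo_double +
  fixes B N n \<eta> f R e mR \<eta>R
  assumes monad: "is_monad D (B, N, n, \<eta>)"
    and e: "e \<in> Sq D" "sdom D e = R" "scod D e = N" "sleft D e = f" "sright D e = f" "cartesian_sq e"
    and mult: "globular D mR (hcomp D R R) R" "scomp D e mR = scomp D n (shcomp D e e)"
    and unit: "globular D \<eta>R (hunit D (vdom D f)) R" "scomp D e \<eta>R = scomp D \<eta> (sunit D f)"
begin

lemmas monad_simps = is_monadD[OF monad]

lemma restriction_simps:
  shows "f \<in> VAr D" "vcod D f = B" "R \<in> HAr D" "hsrc D R = vdom D f" "htgt D R = vdom D f"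
    "mR \<in> Sq D" "sdom D mR = hcomp D R R" "scod D mR = R" "sleft D mR = vid D (vdom D f)" "sright D mR = vid D (vdom D f)"
    "\<eta>R \<in> Sq D" "sdom D \<eta>R = hunit D (vdom D f)" "scod D \<eta>R = R"
    "sleft D \<eta>R = vid D (vdom D f)" "sright D \<eta>R = vid D (vdom D f)"
proof -
  have R: "f \<in> VAr D" "vcod D f = B" "R \<in> HAr D" "hsrc D R = vdom D f" "htgt D R = vdom D f"
    using e sleft_sright_simps[OF e(1)] sdom_scod_in_HAr[OF e(1)] monad_simps by auto
  then show "f \<in> VAr D" "vcod D f = B" "R \<in> HAr D" "hsrc D R = vdom D f" "htgt D R = vdom D f"
    by simp_all
  show "mR \<in> Sq D" "sdom D mR = hcomp D R R" "scod D mR = R" "sleft D mR = vid D (vdom D f)"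
    "sright D mR = vid D (vdom D f)" "\<eta>R \<in> Sq D" "sdom D \<eta>R = hunit D (vdom D f)" "scod D \<eta>R = R"
    "sleft D \<eta>R = vid D (vdom D f)" "sright D \<eta>R = vid D (vdom D f)"
    using mult(1) unit(1) R unfolding globular_def by simp_all
qed

lemmas boundary_simps = e(1-5) monad_simps restriction_simps

lemma mult_factorization:
  assumes "x \<in> Sq D" "scod D x = hcomp D R R"
  shows "scomp D e (scomp D mR x) = scomp D n (scomp D (shcomp D e e) x)"
  using assms mult(2) boundary_simps by (simp flip: scomp_assoc)

lemma unit_factorization:
  assumes "x \<in> Sq D" "scod D x = hunit D (vdom D f)"
  shows "scomp D e (scomp D \<eta>R x) = scomp D \<eta> (scomp D (sunit D f) x)"
  using assms unit(2) boundary_simps by (simp flip: scomp_assoc)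

lemma monad_laws:
  shows "scomp D n (shcomp D n (sid D N)) = scomp D n (scomp D (shcomp D (sid D N) n) (assoc D N N N))"
    "scomp D n (shcomp D \<eta> (sid D N)) = lunit D N" "scomp D n (shcomp D (sid D N) \<eta>) = runit D N"
  using monad unfolding is_monad_def by simp_all

lemma mult_assoc:
  "scomp D mR (shcomp D mR (sid D R)) = scomp D mR (scomp D (shcomp D (sid D R) mR) (assoc D R R R))"
proof (rule cartesian_sq_cancel[OF e(6)])
  have natural: "scomp D (assoc D N N N) (shcomp D (shcomp D e e) e) = scomp D (shcomp D e (shcomp D e e)) (assoc D R R R)"
    using assoc_natural[of e e e] boundary_simps by simp
  have "scomp D e (scomp D mR (shcomp D mR (sid D R))) = scomp D n (shcomp D (scomp D e mR) (scomp D (sid D N) e))"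
    using interchange[of "sid D R" e mR e] mult_factorization boundary_simps by simp
  also have "\<dots> = scomp D (scomp D n (shcomp D n (sid D N))) (shcomp D (shcomp D e e) e)"
    unfolding mult(2) using interchange[of e "sid D N" "shcomp D e e" n] boundary_simps by simp
  also have "\<dots> = scomp D n (scomp D (shcomp D (sid D N) n) (scomp D (assoc D N N N) (shcomp D (shcomp D e e) e)))"
    unfolding monad_laws(1) using boundary_simps by simp
  also have "\<dots> = scomp D n (scomp D (shcomp D (scomp D (sid D N) e) (scomp D n (shcomp D e e))) (assoc D R R R))"
    unfolding natural using interchange[of "shcomp D e e" n e "sid D N"] boundary_simps by simp
  also have "\<dots> = scomp D e (scomp D mR (scomp D (shcomp D (sid D R) mR) (assoc D R R R)))"
    unfolding mult(2)[symmetric] using interchange[of mR e "sid D R" e] mult_factorization boundary_simps by simp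
  finally show "scomp D e (scomp D mR (shcomp D mR (sid D R))) =
      scomp D e (scomp D mR (scomp D (shcomp D (sid D R) mR) (assoc D R R R)))" .
qed (use boundary_simps in simp_all)

lemma mult_lunit: "scomp D mR (shcomp D \<eta>R (sid D R)) = lunit D R"
proof (rule cartesian_sq_cancel[OF e(6)])
  have "scomp D e (scomp D mR (shcomp D \<eta>R (sid D R))) = scomp D n (shcomp D (scomp D e \<eta>R) (scomp D (sid D N) e))"
    using interchange[of "sid D R" e \<eta>R e] mult_factorization boundary_simps by simp
  also have "\<dots> = scomp D (scomp D n (shcomp D \<eta> (sid D N))) (shcomp D (sunit D f) e)"
    unfolding unit(2) using interchange[of e "sid D N" "sunit D f" \<eta>] boundary_simps by simp
  also have "\<dots> = scomp D e (lunit D R)"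
    unfolding monad_laws(2) using unit_natural(1)[OF e(1)] boundary_simps by simp
  finally show "scomp D e (scomp D mR (shcomp D \<eta>R (sid D R))) = scomp D e (lunit D R)" .
qed (use boundary_simps in simp_all)

lemma mult_runit: "scomp D mR (shcomp D (sid D R) \<eta>R) = runit D R"
proof (rule cartesian_sq_cancel[OF e(6)])
  have "scomp D e (scomp D mR (shcomp D (sid D R) \<eta>R)) = scomp D n (shcomp D (scomp D (sid D N) e) (scomp D e \<eta>R))"
    using interchange[of \<eta>R e "sid D R" e] mult_factorization boundary_simps by simp
  also have "\<dots> = scomp D (scomp D n (shcomp D (sid D N) \<eta>)) (shcomp D e (sunit D f))"
    unfolding unit(2) using interchange[of "sunit D f" \<eta> e "sid D N"] boundary_simps by simp
  also have "\<dots> = scomp D e (runit D R)"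
    unfolding monad_laws(3) using unit_natural(2)[OF e(1)] boundary_simps by simp
  finally show "scomp D e (scomp D mR (shcomp D (sid D R) \<eta>R)) = scomp D e (runit D R)" .
qed (use boundary_simps in simp_all)

lemma is_monad_restriction: "is_monad D (vdom D f, R, mR, \<eta>R)"
  unfolding is_monad_def using mult(1) unit(1) mult_assoc mult_lunit mult_runit boundary_simps by simp

lemma monad_mor_restriction: "monad_mor D (vdom D f, R, mR, \<eta>R) (B, N, n, \<eta>) e"
  unfolding monad_mor_def using is_monad_restriction monad mult(2) unit(2) boundary_simps by simp

lemma monad_mor_factorization:
  assumes h: "monad_mor D (C, P, p, \<zeta>) (B, N, n, \<eta>) h"
    and k: "k \<in> Sq D" "scod D k = R" "sleft D k = sright D k" "scomp D e k = h"
  shows "monad_mor D (C, P, p, \<zeta>) (vdom D f, R, mR, \<eta>R) k"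
proof -
  have "is_monad D (C, P, p, \<zeta>)"
    using h unfolding monad_mor_def by simp
  note P_monad = is_monadD[OF this]
  have h_mor: "scomp D h p = scomp D n (shcomp D h h)" "scomp D h \<zeta> = scomp D \<eta> (sunit D (sleft D h))"
    using h unfolding monad_mor_def by simp_all
  have "sdom D h = P"
    using h unfolding monad_mor_def by simp
  moreover have "sdom D (scomp D e k) = sdom D k"
    using k(1,2) boundary_simps by simp
  ultimately have k_dom: "sdom D k = P"
    using k(4) by simp
  have "scomp D k p = scomp D mR (shcomp D k k)"
  proof (rule cartesian_sq_cancel[OF e(6)])
    have "scomp D e (scomp D k p) = scomp D h p"
      using k k_dom P_monad boundary_simps by (simp flip: scomp_assoc)
    also have "\<dots> = scomp D n (shcomp D (scomp D e k) (scomp D e k))"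
      unfolding h_mor(1) k(4) ..
    also have "\<dots> = scomp D e (scomp D mR (shcomp D k k))"
      using interchange[of k e k e] mult_factorization k(1-3) k_dom P_monad boundary_simps by simp
    finally show "scomp D e (scomp D k p) = scomp D e (scomp D mR (shcomp D k k))" .
  qed (use k k_dom P_monad boundary_simps in simp_all)
  moreover have "scomp D k \<zeta> = scomp D \<eta>R (sunit D (sleft D k))"
  proof (rule cartesian_sq_cancel[OF e(6)])
    have "scomp D e (scomp D k \<zeta>) = scomp D h \<zeta>"
      using k k_dom P_monad boundary_simps by (simp flip: scomp_assoc)
    also have "\<dots> = scomp D \<eta> (sunit D (sleft D (scomp D e k)))"
      unfolding h_mor(2) k(4) ..
    also have "\<dots> = scomp D e (scomp D \<eta>R (sunit D (sleft D k)))"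
      using unit_factorization k(1-3) k_dom P_monad boundary_simps by (simp add: sunit_vcomp)
    finally show "scomp D e (scomp D k \<zeta>) = scomp D e (scomp D \<eta>R (sunit D (sleft D k)))" .
  qed (use k k_dom P_monad boundary_simps in simp_all)
  ultimately show ?thesis
    unfolding monad_mor_def using h is_monad_restriction k k_dom unfolding monad_mor_def by simp
qed

lemma cartesian_monad_mor:
  "cartesian (is_monad D) (monad_mor D) (scomp D) fst (sleft D) (vhom D) (vcomp D)
     (vdom D f, R, mR, \<eta>R) (B, N, n, \<eta>) e"
  unfolding cartesian_def
proof (intro allI impI)
  fix z h g
  assume zhg: "is_monad D z \<and> monad_mor D z (B, N, n, \<eta>) h \<and> vhom D (fst z) (fst (vdom D f, R, mR, \<eta>R)) g \<and>
    vcomp D (sleft D e) g = sleft D h"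
  obtain C P p \<zeta> where z: "z = (C, P, p, \<zeta>)"
    by (cases z)
  from zhg have h: "monad_mor D (C, P, p, \<zeta>) (B, N, n, \<eta>) h" "h \<in> Sq D" "scod D h = N"
      "sleft D h = vcomp D f g" "sright D h = vcomp D f g"
    and g: "g \<in> VAr D" "vdom D g = C" "vcod D g = vdom D f"
    using e unfolding z vhom_def monad_mor_def by auto
  obtain k where k: "k \<in> Sq D" "scod D k = R" "sleft D k = g" "sright D k = g" "scomp D e k = h"
    by (rule cartesian_sqE[OF e(6) h(2)]) (use h g boundary_simps in simp_all)
  show "\<exists>!k. monad_mor D z (vdom D f, R, mR, \<eta>R) k \<and> sleft D k = g \<and> scomp D e k = h"
  proof (rule ex1I[of _ k])
    show "monad_mor D z (vdom D f, R, mR, \<eta>R) k \<and> sleft D k = g \<and> scomp D e k = h"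
      unfolding z using monad_mor_factorization[OF h(1) k(1,2) _ k(5)] k by simp
  next
    fix k' assume "monad_mor D z (vdom D f, R, mR, \<eta>R) k' \<and> sleft D k' = g \<and> scomp D e k' = h"
    then have "k' \<in> Sq D" "scod D k' = R" "sleft D k' = g" "sright D k' = g" "scomp D e k' = h"
      unfolding z monad_mor_def by auto
    then show "k' = k"
      using cartesian_sq_cancel[OF e(6), of k' k] k boundary_simps by simp
  qed
qed

end

lemma (in pseudo_double) cartesian_monad_restriction_exists:
  assumes "\<forall>f\<in>VAr D. has_companion D f \<and> has_conjoint D f"
    and monad: "is_monad D (B, N, n, \<eta>)" and f: "f \<in> VAr D" "vcod D f = B"
  obtains R e mR \<eta>R where "cartesian_monad_restriction D B N n \<eta> f R e mR \<eta>R"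
proof -
  note N = is_monadD[OF monad]
  obtain R e where R: "R \<in> HAr D" "hsrc D R = vdom D f" "htgt D R = vdom D f"
    and e: "e \<in> Sq D" "sdom D e = R" "scod D e = N" "sleft D e = f" "sright D e = f" "cartesian_sq e"
    by (rule cartesian_restriction[of f f N]) (use assms N in simp_all)
  note H = e R f N vdom_vcod_in_Ob[OF f(1)]
  obtain mR where mR: "mR \<in> Sq D" "scod D mR = R" "sleft D mR = vid D (vdom D f)" "sright D mR = vid D (vdom D f)"
      "scomp D e mR = scomp D n (shcomp D e e)"
    by (rule cartesian_sqE[OF e(6), of "scomp D n (shcomp D e e)" "vid D (vdom D f)" "vid D (vdom D f)"])
      (use H in simp_all)
  obtain \<eta>R where \<eta>R: "\<eta>R \<in> Sq D" "scod D \<eta>R = R" "sleft D \<eta>R = vid D (vdom D f)" "sright D \<eta>R = vid D (vdom D f)"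
      "scomp D e \<eta>R = scomp D \<eta> (sunit D f)"
    by (rule cartesian_sqE[OF e(6), of "scomp D \<eta> (sunit D f)" "vid D (vdom D f)" "vid D (vdom D f)"])
      (use H in simp_all)
  have "sdom D mR = sdom D (scomp D e mR)" "sdom D \<eta>R = sdom D (scomp D e \<eta>R)"
    using mR(1,2) \<eta>R(1,2) e by simp_all
  then have "sdom D mR = hcomp D R R" "sdom D \<eta>R = hunit D (vdom D f)"
    unfolding mR(5) \<eta>R(5) using H by simp_all
  then have "cartesian_monad_restriction D B N n \<eta> f R e mR \<eta>R"
    by unfold_locales (use monad mR \<eta>R H in \<open>simp_all add: globular_def\<close>)
  then show ?thesis
    by (rule that)
qed

lemma Mnd_fibration_if_fibrant:
  assumes "fibrant D"
  shows "Mnd_fibration D"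
  unfolding Mnd_fibration_def fibration_def
proof (intro allI impI)
  interpret pseudo_double D
    using assms unfolding fibrant_def by unfold_locales simp
  fix y a f
  assume "is_monad D y \<and> vhom D a (fst y) f"
  moreover obtain B N n \<eta> where y: "y = (B, N, n, \<eta>)"
    by (cases y)
  ultimately have "is_monad D (B, N, n, \<eta>)" "f \<in> VAr D" "vdom D f = a" "vcod D f = B"
    unfolding vhom_def by auto
  then obtain R e mR \<eta>R where "cartesian_monad_restriction D B N n \<eta> f R e mR \<eta>R"
    using cartesian_monad_restriction_exists assms unfolding fibrant_def by blast
  then interpret cartesian_monad_restriction D B N n \<eta> f R e mR \<eta>R .
  show "\<exists>x e. is_monad D x \<and> monad_mor D x y e \<and> fst x = a \<and> sleft D e = f \<and>
      cartesian (is_monad D) (monad_mor D) (scomp D) fst (sleft D) (vhom D) (vcomp D) x y e"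
    using is_monad_restriction monad_mor_restriction cartesian_monad_mor e(4) \<open>vdom D f = a\<close> unfolding y
    by (intro exI[of _ "(vdom D f, R, mR, \<eta>R)"] exI[of _ e]) simp
qed

section \<open>Duality\<close>

text \<open>The vertical opposite: comonads in \<open>D\<close> are the monads in \<open>vertical_op D\<close>, and the category
  of comonads of \<open>D\<close> is opposite to that of monads of \<open>vertical_op D\<close>.\<close>

definition vertical_op :: "('o,'v,'h,'s,'z) dblcat_scheme \<Rightarrow> ('o,'v,'h,'s) dblcat" where
  "vertical_op D = \<lparr>Ob = Ob D, VAr = VAr D, vdom = vcod D, vcod = vdom D, vid = vid D,
     vcomp = (\<lambda>g f. vcomp D f g), HAr = HAr D, hsrc = hsrc D, htgt = htgt D, Sq = Sq D,
     sdom = scod D, scod = sdom D, sleft = sleft D, sright = sright D, sid = sid D,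
     scomp = (\<lambda>\<beta> \<alpha>. scomp D \<alpha> \<beta>), hunit = hunit D, sunit = sunit D, hcomp = hcomp D, shcomp = shcomp D,
     assoc = (\<lambda>P N M. sinv D (assoc D P N M)), lunit = (\<lambda>M. sinv D (lunit D M)),
     runit = (\<lambda>M. sinv D (runit D M))\<rparr>"

lemma vertical_op_simps [simp]:
  "Ob (vertical_op D) = Ob D" "VAr (vertical_op D) = VAr D" "vdom (vertical_op D) = vcod D"
  "vcod (vertical_op D) = vdom D" "vid (vertical_op D) = vid D" "vcomp (vertical_op D) g f = vcomp D f g"
  "HAr (vertical_op D) = HAr D" "hsrc (vertical_op D) = hsrc D" "htgt (vertical_op D) = htgt D"
  "Sq (vertical_op D) = Sq D" "sdom (vertical_op D) = scod D" "scod (vertical_op D) = sdom D"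
  "sleft (vertical_op D) = sleft D" "sright (vertical_op D) = sright D" "sid (vertical_op D) = sid D"
  "scomp (vertical_op D) \<beta> \<alpha> = scomp D \<alpha> \<beta>" "hunit (vertical_op D) = hunit D" "sunit (vertical_op D) = sunit D"
  "hcomp (vertical_op D) = hcomp D" "shcomp (vertical_op D) = shcomp D"
  "assoc (vertical_op D) P N M = sinv D (assoc D P N M)" "lunit (vertical_op D) M = sinv D (lunit D M)"
  "runit (vertical_op D) M = sinv D (runit D M)"
  by (simp_all add: vertical_op_def)

context pseudo_double
begin

lemma glob_iso_vertical_op:
  assumes "glob_iso D \<theta> X Y"
  shows "glob_iso (vertical_op D) (sinv D \<theta>) X Y"
  unfolding glob_iso_def using glob_iso_simps[OF assms] glob_isoD[OF assms] by auto

lemma sinv_assoc_natural: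
  assumes "\<alpha> \<in> Sq D" "\<beta> \<in> Sq D" "\<gamma> \<in> Sq D" "sright D \<alpha> = sleft D \<beta>" "sright D \<beta> = sleft D \<gamma>"
  shows "scomp D (shcomp D (shcomp D \<gamma> \<beta>) \<alpha>) (sinv D (assoc D (sdom D \<gamma>) (sdom D \<beta>) (sdom D \<alpha>))) =
    scomp D (sinv D (assoc D (scod D \<gamma>) (scod D \<beta>) (scod D \<alpha>))) (shcomp D \<gamma> (shcomp D \<beta> \<alpha>))"
  by (rule glob_iso_commute_sinv[OF assoc_glob_iso assoc_glob_iso _ _ _ _ _ _ assoc_natural])
    (use assms shcomp_composable in simp_all)

lemma sinv_unit_natural:
  assumes "\<alpha> \<in> Sq D"
  shows "scomp D (shcomp D (sunit D (sright D \<alpha>)) \<alpha>) (sinv D (lunit D (sdom D \<alpha>))) =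
      scomp D (sinv D (lunit D (scod D \<alpha>))) \<alpha>"
    "scomp D (shcomp D \<alpha> (sunit D (sleft D \<alpha>))) (sinv D (runit D (sdom D \<alpha>))) =
      scomp D (sinv D (runit D (scod D \<alpha>))) \<alpha>"
  by (rule glob_iso_commute_sinv[OF unit_glob_iso(1) unit_glob_iso(1) _ _ _ _ _ _ unit_natural(1)];
      use assms in simp)
    (rule glob_iso_commute_sinv[OF unit_glob_iso(2) unit_glob_iso(2) _ _ _ _ _ _ unit_natural(2)];
      use assms in simp)

lemma sinv_triangle:
  assumes "M \<in> HAr D" "N \<in> HAr D" "htgt D M = hsrc D N"
  shows "scomp D (sinv D (assoc D N (hunit D (hsrc D N)) M)) (shcomp D (sid D N) (sinv D (lunit D M))) =
    shcomp D (sinv D (runit D N)) (sid D M)"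
proof -
  let ?I = "hunit D (htgt D M)"
  have "scomp D (sinv D (assoc D N (hunit D (hsrc D N)) M)) (shcomp D (sid D N) (sinv D (lunit D M))) =
      sinv D (scomp D (shcomp D (sid D N) (lunit D M)) (assoc D N ?I M))"
    using glob_iso_scomp(2)[OF assoc_glob_iso[of M ?I N] glob_iso_shcomp(1)[OF unit_glob_iso(1)[of M] glob_iso_sid(1)[of N]]]
      glob_iso_shcomp(2)[OF unit_glob_iso(1)[of M] glob_iso_sid(1)[of N]] glob_iso_sid(2)[of N] assms
    by simp
  also have "\<dots> = shcomp D (sinv D (runit D N)) (sid D M)"
    using triangle[OF assms] glob_iso_shcomp(2)[OF glob_iso_sid(1)[of M] unit_glob_iso(2)[of N]]
      glob_iso_sid(2)[of M] assms
    by simp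
  finally show ?thesis .
qed

lemma sinv_pentagon:
  assumes "M \<in> HAr D" "N \<in> HAr D" "P \<in> HAr D" "Q \<in> HAr D"
    "htgt D M = hsrc D N" "htgt D N = hsrc D P" "htgt D P = hsrc D Q"
  shows "scomp D (sinv D (assoc D (hcomp D Q P) N M)) (sinv D (assoc D Q P (hcomp D N M))) =
    scomp D (shcomp D (sinv D (assoc D Q P N)) (sid D M))
      (scomp D (sinv D (assoc D Q (hcomp D P N) M)) (shcomp D (sid D Q) (sinv D (assoc D P N M))))"
proof -
  note S2 = glob_iso_shcomp[OF glob_iso_sid(1)[of M] assoc_glob_iso[of N P Q]]
  note A3 = assoc_glob_iso[of M "hcomp D P N" Q]
  note S1 = glob_iso_shcomp[OF assoc_glob_iso[of M N P] glob_iso_sid(1)[of Q]]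
  have "scomp D (sinv D (assoc D (hcomp D Q P) N M)) (sinv D (assoc D Q P (hcomp D N M))) =
      sinv D (scomp D (assoc D Q P (hcomp D N M)) (assoc D (hcomp D Q P) N M))"
    using glob_iso_scomp(2)[OF assoc_glob_iso[of M N "hcomp D Q P"] assoc_glob_iso[of "hcomp D N M" P Q]] assms
    by simp
  also have "\<dots> = sinv D (scomp D (shcomp D (sid D Q) (assoc D P N M))
      (scomp D (assoc D Q (hcomp D P N) M) (shcomp D (assoc D Q P N) (sid D M))))"
    unfolding pentagon[OF assms] ..
  also have "\<dots> = scomp D (shcomp D (sinv D (assoc D Q P N)) (sid D M))
      (scomp D (sinv D (assoc D Q (hcomp D P N) M)) (shcomp D (sid D Q) (sinv D (assoc D P N M))))"
    using glob_iso_scomp(2)[OF glob_iso_scomp(1)[OF S2(1) A3] S1(1)] glob_iso_scomp(2)[OF S2(1) A3]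
      S1(2) S2(2) glob_iso_sid(2) assms
    by simp
  finally show ?thesis .
qed

lemma pseudo_double_category_vertical_op: "pseudo_double_category (vertical_op D)"
  unfolding pseudo_double_category_def vertical_op_simps
  by (simp add: interchange sunit_vcomp glob_iso_vertical_op assoc_glob_iso unit_glob_iso
      sinv_assoc_natural sinv_unit_natural sinv_pentagon sinv_triangle)

lemma conjoint_vertical_op_companion:
  assumes "conjoint D f fc q1 q2"
  shows "companion (vertical_op D) f fc q2 q1"
proof -
  note q = conjointD[OF assms]
  have "scomp D (shcomp D q2 q1) (sinv D (lunit D fc)) = scomp D (sinv D (runit D fc)) (sid D fc)"
    by (rule glob_iso_commute_sinv[OF unit_glob_iso(2) unit_glob_iso(1)]) (use q in simp_all)
  then show ?thesis
    unfolding companion_def using q by simp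
qed

lemma companion_vertical_op_conjoint:
  assumes "companion D f fh p1 p2"
  shows "conjoint (vertical_op D) f fh p2 p1"
proof -
  note p = companionD[OF assms]
  have "scomp D (shcomp D p1 p2) (sinv D (runit D fh)) = scomp D (sinv D (lunit D fh)) (sid D fh)"
    by (rule glob_iso_commute_sinv[OF unit_glob_iso(1) unit_glob_iso(2)]) (use p in simp_all)
  then show ?thesis
    unfolding conjoint_def using p by simp
qed

lemma fibrant_vertical_op:
  assumes "\<forall>f\<in>VAr D. has_companion D f \<and> has_conjoint D f"
  shows "fibrant (vertical_op D)"
  unfolding fibrant_def
proof (intro conjI ballI pseudo_double_category_vertical_op)
  fix f
  assume "f \<in> VAr (vertical_op D)"
  then have "has_companion D f" "has_conjoint D f"
    using assms by simp_all
  then show "has_companion (vertical_op D) f" "has_conjoint (vertical_op D) f"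
    unfolding has_companion_iff has_conjoint_iff
    using conjoint_vertical_op_companion companion_vertical_op_conjoint by blast+
qed

lemma is_monad_vertical_op: "is_monad (vertical_op D) = is_comonad D"
proof
  fix X :: "'o \<times> 'h \<times> 's \<times> 's"
  obtain A C \<Delta> \<epsilon> where X: "X = (A, C, \<Delta>, \<epsilon>)"
    by (cases X)
  have "is_monad (vertical_op D) (A, C, \<Delta>, \<epsilon>) \<longleftrightarrow> is_comonad D (A, C, \<Delta>, \<epsilon>)"
  proof (cases "A \<in> Ob D \<and> C \<in> HAr D \<and> hsrc D C = A \<and> htgt D C = A \<and>
      globular D \<Delta> C (hcomp D C C) \<and> globular D \<epsilon> C (hunit D A)")
    case True
    then have C: "A \<in> Ob D" "C \<in> HAr D" "hsrc D C = A" "htgt D C = A"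
      and \<Delta>: "\<Delta> \<in> Sq D" "sdom D \<Delta> = C" "scod D \<Delta> = hcomp D C C" "sleft D \<Delta> = vid D A" "sright D \<Delta> = vid D A"
      and \<epsilon>: "\<epsilon> \<in> Sq D" "sdom D \<epsilon> = C" "scod D \<epsilon> = hunit D A" "sleft D \<epsilon> = vid D A" "sright D \<epsilon> = vid D A"
      unfolding globular_def by auto
    have "scomp D (assoc D C C C) (scomp D (shcomp D \<Delta> (sid D C)) \<Delta>) = scomp D (shcomp D (sid D C) \<Delta>) \<Delta> \<longleftrightarrow>
        scomp D (shcomp D \<Delta> (sid D C)) \<Delta> = scomp D (sinv D (assoc D C C C)) (scomp D (shcomp D (sid D C) \<Delta>) \<Delta>)"
      by (rule glob_iso_scomp_eq_iff[OF assoc_glob_iso]) (use C \<Delta> in simp_all)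
    moreover have "scomp D (lunit D C) (scomp D (shcomp D \<epsilon> (sid D C)) \<Delta>) = sid D C \<longleftrightarrow>
        scomp D (shcomp D \<epsilon> (sid D C)) \<Delta> = sinv D (lunit D C)"
      using glob_iso_scomp_eq_iff[OF unit_glob_iso(1), of C "scomp D (shcomp D \<epsilon> (sid D C)) \<Delta>" "sid D C"] C \<Delta> \<epsilon>
      by simp
    moreover have "scomp D (runit D C) (scomp D (shcomp D (sid D C) \<epsilon>) \<Delta>) = sid D C \<longleftrightarrow>
        scomp D (shcomp D (sid D C) \<epsilon>) \<Delta> = sinv D (runit D C)"
      using glob_iso_scomp_eq_iff[OF unit_glob_iso(2), of C "scomp D (shcomp D (sid D C) \<epsilon>) \<Delta>" "sid D C"] C \<Delta> \<epsilon>
      by simp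
    ultimately show ?thesis
      unfolding is_monad_def is_comonad_def globular_def using C \<Delta> \<epsilon> by simp
  next
    case False
    then show ?thesis
      unfolding is_monad_def is_comonad_def globular_def by auto
  qed
  then show "is_monad (vertical_op D) X = is_comonad D X"
    unfolding X .
qed

lemma monad_mor_vertical_op: "monad_mor (vertical_op D) = (\<lambda>X Y. comonad_mor D Y X)"
  unfolding monad_mor_def comonad_mor_def is_monad_vertical_op
  by (intro ext) (auto split: prod.split)

lemma Cmd_opfibration_iff: "Cmd_opfibration D \<longleftrightarrow> Mnd_fibration (vertical_op D)"
proof -
  have "scomp (vertical_op D) = (\<lambda>\<beta> \<alpha>. scomp D \<alpha> \<beta>)" "vcomp (vertical_op D) = (\<lambda>g f. vcomp D f g)"
    "vhom (vertical_op D) = (\<lambda>a b. vhom D b a)"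
    by (auto simp: fun_eq_iff vhom_def)
  then show ?thesis
    unfolding Cmd_opfibration_def Mnd_fibration_def opfibration_def is_monad_vertical_op monad_mor_vertical_op
    by simp
qed

end

theorem proposition3p17:
  fixes D :: "('o,'v,'h,'s) dblcat"
  assumes "fibrant D"
  shows "Mnd_fibration D \<and> Cmd_opfibration D"
proof -
  interpret pseudo_double D
    using assms unfolding fibrant_def by unfold_locales simp
  have "fibrant (vertical_op D)"
    by (rule fibrant_vertical_op) (use assms in \<open>simp add: fibrant_def\<close>)
  then show ?thesis
    unfolding Cmd_opfibration_iff using assms by (simp add: Mnd_fibration_if_fibrant)
qed

end
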